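(* In the 2-sided device-independent (2SDI) setting where Alice measures the qubit observables $A_0=\sigma_x$, $A_1=\sigma_y$ and Bob and Charlie are black boxes, the Svetlichny family $P^V_{SvF}$ ($0<V\le1$) demonstrates genuine tripartite steering if and only if $V>\frac1{\sqrt2}$.
   Context: Outcomes and settings: $a,b,c,x,y,z\in\{0,1\}$. For a qubit observable $O$ with eigenvalues $\pm1$, the measurement has projectors $M_0=(\mathbb 1+O)/2$, $M_1=(\mathbb 1-O)/2$; $M^A_{a|x}$ denotes the projectors of $A_x$. Svetlichny family: $P^V_{SvF}(abc|xyz)=\frac{2+(-1)^{a\oplus b\oplus c\oplus xy\oplus yz\oplus xz}\sqrt2\,V}{16}$. Genuine tripartite steering in the 2SDI scenario: $P$ demonstrates it iff there is no finite $d$, biseparable state $\rho^{ABC}=\sum_\lambda p_\lambda\rho^\lambda_A\otimes\rho^\lambda_{BC}+\sum_\lambda q_\lambda\rho^\lambda_{AC}\otimes\rho^\lambda_B+\sum_\lambda r_\lambda\rho^\lambda_{AB}\otimes\rho^\lambda_C$ on $\mathbb C^2\otimes\mathbb C^d\otimes\mathbb C^d$ (weights nonnegative summing to 1), and POVMs $\{N_{b|y}\}_b$, $\{N'_{c|z}\}_c$ on $\mathbb C^d$ such that $P(abc|xyz)=\mathrm{Tr}[(M^A_{a|x}\otimes N_{b|y}\otimes N'_{c|z})\rho^{ABC}]$. *)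

theory Defs
  imports Complex_Main "Jordan_Normal_Form.Matrix"
begin

definition mtrace :: "complex mat \<Rightarrow> complex" where
  "mtrace M = (\<Sum>i<dim_row M. M $$ (i, i))"

definition psd :: "nat \<Rightarrow> complex mat \<Rightarrow> bool" where
  "psd n M \<longleftrightarrow> M \<in> carrier_mat n n \<and>
     (\<forall>v \<in> carrier_vec n.
        let q = (\<Sum>i<n. cnj (v $ i) * (M *\<^sub>v v) $ i) in Im q = 0 \<and> Re q \<ge> 0)"

definition density :: "nat \<Rightarrow> complex mat \<Rightarrow> bool" where
  "density n \<rho> \<longleftrightarrow> psd n \<rho> \<and> mtrace \<rho> = 1"

definition kron :: "complex mat \<Rightarrow> complex mat \<Rightarrow> complex mat" where
  "kron A B = mat (dim_row A * dim_row B) (dim_col A * dim_col B)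
     (\<lambda>(i, j). A $$ (i div dim_row B, j div dim_col B) * B $$ (i mod dim_row B, j mod dim_col B))"

definition povm2 :: "nat \<Rightarrow> (nat \<Rightarrow> complex mat) \<Rightarrow> bool" where
  "povm2 d N \<longleftrightarrow> psd d (N 0) \<and> psd d (N 1) \<and> N 0 + N 1 = 1\<^sub>m d"

text \<open>Index i < 2*d*d corresponds to (a,b,c) with i = a*d*d + b*d + c.\<close>
definition idxA :: "nat \<Rightarrow> nat \<Rightarrow> nat" where "idxA d i = i div (d * d)"
definition idxB :: "nat \<Rightarrow> nat \<Rightarrow> nat" where "idxB d i = (i div d) mod d"
definition idxC :: "nat \<Rightarrow> nat \<Rightarrow> nat" where "idxC d i = i mod d"

text \<open>rho_AC \<otimes> rho_B, embedded in the A,B,C ordering (rho_AC acts on C^2 \<otimes> C^d with ordering A,C).\<close>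
definition prod_AC_B :: "nat \<Rightarrow> complex mat \<Rightarrow> complex mat \<Rightarrow> complex mat" where
  "prod_AC_B d X Y = mat (2 * d * d) (2 * d * d)
     (\<lambda>(i, j). X $$ (idxA d i * d + idxC d i, idxA d j * d + idxC d j) * Y $$ (idxB d i, idxB d j))"

definition biseparable :: "nat \<Rightarrow> complex mat \<Rightarrow> bool" where
  "biseparable d \<rho> \<longleftrightarrow>
    (\<exists>(n::nat) (p::nat \<Rightarrow> real) (q::nat \<Rightarrow> real) (r::nat \<Rightarrow> real)
        \<rho>A \<rho>BC \<rho>AC \<rho>B \<rho>AB \<rho>C.
       (\<forall>l<n. p l \<ge> 0 \<and> q l \<ge> 0 \<and> r l \<ge> 0 \<and>
              density 2 (\<rho>A l) \<and> density (d * d) (\<rho>BC l) \<and>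
              density (2 * d) (\<rho>AC l) \<and> density d (\<rho>B l) \<and>
              density (2 * d) (\<rho>AB l) \<and> density d (\<rho>C l)) \<and>
       (\<Sum>l<n. p l + q l + r l) = 1 \<and>
       \<rho> = mat (2 * d * d) (2 * d * d) (\<lambda>ij.
              \<Sum>l<n. complex_of_real (p l) * kron (\<rho>A l) (\<rho>BC l) $$ ij
                    + complex_of_real (q l) * prod_AC_B d (\<rho>AC l) (\<rho>B l) $$ ij
                    + complex_of_real (r l) * kron (\<rho>AB l) (\<rho>C l) $$ ij))"

definition sigma_x :: "complex mat" where
  "sigma_x = mat_of_rows_list 2 [[0, 1], [1, 0]]"

definition sigma_y :: "complex mat" where
  "sigma_y = mat_of_rows_list 2 [[0, -\<i>], [\<i>, 0]]"

definition alice_obs :: "nat \<Rightarrow> complex mat" where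
  "alice_obs x = (if x = 0 then sigma_x else sigma_y)"

definition alice_proj :: "nat \<Rightarrow> nat \<Rightarrow> complex mat" where
  "alice_proj a x = (1 / 2 :: complex) \<cdot>\<^sub>m (1\<^sub>m 2 + ((-1) ^ a :: complex) \<cdot>\<^sub>m alice_obs x)"

type_synonym behaviour = "nat \<Rightarrow> nat \<Rightarrow> nat \<Rightarrow> nat \<Rightarrow> nat \<Rightarrow> nat \<Rightarrow> real"
  (* P a b c x y z, all arguments in {0,1} *)

text \<open>Svetlichny family; (-1)^(a xor b xor c xor xy xor yz xor xz) equals (-1)^(a+b+c+xy+yz+xz).\<close>
definition SvF :: "real \<Rightarrow> behaviour" where
  "SvF V a b c x y z = (2 + (-1) ^ (a + b + c + x * y + y * z + x * z) * sqrt 2 * V) / 16"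

definition biseparable_model :: "behaviour \<Rightarrow> bool" where
  "biseparable_model P \<longleftrightarrow>
    (\<exists>(d::nat) \<rho> (N :: nat \<Rightarrow> nat \<Rightarrow> complex mat) (N' :: nat \<Rightarrow> nat \<Rightarrow> complex mat).
       d \<ge> 1 \<and> biseparable d \<rho> \<and>
       (\<forall>y \<in> {0, 1}. povm2 d (N y)) \<and> (\<forall>z \<in> {0, 1}. povm2 d (N' z)) \<and>
       (\<forall>a \<in> {0, 1}. \<forall>b \<in> {0, 1}. \<forall>c \<in> {0, 1}. \<forall>x \<in> {0, 1}. \<forall>y \<in> {0, 1}. \<forall>z \<in> {0, 1}.
          complex_of_real (P a b c x y z) =
            mtrace (kron (kron (alice_proj a x) (N y b)) (N' z c) * \<rho>)))"

definition genuine_tripartite_steering_2SDI :: "behaviour \<Rightarrow> bool" where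
  "genuine_tripartite_steering_2SDI P \<longleftrightarrow> \<not> biseparable_model P"

end

theory Submission
  imports Defs
begin

text \<open>The Svetlichny expression \<open>S(P) = \<Sum> (-1)^(a+b+c+xy+yz+xz) P(abc|xyz)\<close> equals \<open>4\<surd>2 V\<close> on the
  Svetlichny family. In a biseparable model every component of the state is a product across some
  bipartition, so Born's rule writes \<open>P\<close> as a convex mixture of products of a one-party and a two-party
  conditional distribution; these are genuine probabilities because the trace of a product of positive
  semidefinite matrices is nonnegative. Against such a product \<open>S\<close> is a CHSH-type combination of
  correlators and is at most 4, so a biseparable model forces \<open>V \<le> 1/\<surd>2\<close>. Conversely, for
  \<open>V \<le> 1/\<surd>2\<close> an explicit model with \<open>d = 4\<close> reproduces \<open>P\<close>: Bob holds a classical label selecting one of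
  his four deterministic responses, while Alice and Charlie share a maximally entangled qubit pair whose
  relative phase is correlated with that label.\<close>

section \<open>Positive semidefinite kernels\<close>

definition quad_form :: "nat \<Rightarrow> (nat \<Rightarrow> nat \<Rightarrow> complex) \<Rightarrow> (nat \<Rightarrow> complex) \<Rightarrow> complex" where
  "quad_form n G v = (\<Sum>i<n. \<Sum>j<n. cnj (v i) * G i j * v j)"

definition psd_kernel :: "nat \<Rightarrow> (nat \<Rightarrow> nat \<Rightarrow> complex) \<Rightarrow> bool" where
  "psd_kernel n G \<longleftrightarrow> (\<forall>v. 0 \<le> quad_form n G v)"

definition trace_pairing :: "nat \<Rightarrow> (nat \<Rightarrow> nat \<Rightarrow> complex) \<Rightarrow> (nat \<Rightarrow> nat \<Rightarrow> complex) \<Rightarrow> complex" where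
  "trace_pairing n F G = (\<Sum>i<n. \<Sum>j<n. F i j * G j i)"

lemma quad_form_shift:
  assumes "m < n"
  shows "quad_form n G (\<lambda>k. v k + (if k = m then t else 0)) = quad_form n G v + cnj t * (\<Sum>j<n. G m j * v j)
     + t * (\<Sum>i<n. cnj (v i) * G i m) + cnj t * t * G m m"
proof -
  have e: "cnj (v i + (if i = m then t else 0)) * G i j * (v j + (if j = m then t else 0)) =
     cnj (v i) * G i j * v j + (if j = m then cnj (v i) * G i m * t else 0)
     + (if i = m then cnj t * G m j * v j else 0) + (if i = m then (if j = m then cnj t * G m m * t else 0) else 0)" for i j
    by (auto simp: algebra_simps)
  have ifs: "(\<Sum>j<n. if P then f j else 0) = (if P then (\<Sum>j<n. f j) else 0)" for P and f :: "nat \<Rightarrow> complex"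
    by simp
  show ?thesis using assms
    unfolding quad_form_def e sum.distrib
    by (simp add: ifs sum.delta' sum_distrib_left sum_distrib_right algebra_simps)
qed

lemma quad_form_two_units:
  assumes "i < n" "m < n"
  shows "quad_form n G (\<lambda>k. (if k = i then 1 else 0) + (if k = m then t else 0)) =
     G i i + cnj t * G m i + t * G i m + cnj t * t * G m m"
proof -
  have unit: "quad_form n G (\<lambda>k. if k = i then 1 else 0) = G i i"
    using quad_form_shift[OF assms(1), of G "\<lambda>_. 0" 1] by (simp add: quad_form_def)
  have "(\<Sum>j<n. G m j * (if j = i then 1 else 0)) = G m i"
    "(\<Sum>k<n. cnj (if k = i then 1 else 0) * G k m) = G i m"
    using assms by (simp_all add: if_distrib[of cnj] if_distrib[of "\<lambda>x. x * _"] if_distrib[of "\<lambda>x. _ * x"] cong: if_cong)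
  with quad_form_shift[OF assms(2), of G "\<lambda>k. if k = i then 1 else 0" t] unit show ?thesis
    by simp
qed

definition unit_fun :: "nat \<Rightarrow> nat \<Rightarrow> complex" where
  "unit_fun k i = (if i = k then 1 else 0)"

lemma quad_form_unit: "k < n \<Longrightarrow> quad_form n G (unit_fun k) = G k k"
  using quad_form_two_units[of k n k G 0] unfolding unit_fun_def by simp

lemma sum_lessThan_two_support:
  fixes f :: "nat \<Rightarrow> 'a :: comm_monoid_add"
  assumes "p < n" "q < n" "p \<noteq> q" "\<And>i. i \<noteq> p \<Longrightarrow> i \<noteq> q \<Longrightarrow> f i = 0"
  shows "(\<Sum>i<n. f i) = f p + f q"
proof -
  have "(\<Sum>i<n. f i) = (\<Sum>i\<in>{p, q}. f i)"
    by (rule sum.mono_neutral_right) (use assms in auto)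
  then show ?thesis using assms(3) by simp
qed

lemma quad_form_two_support:
  assumes "p < n" "q < n" "p \<noteq> q" "\<And>i. i \<noteq> p \<Longrightarrow> i \<noteq> q \<Longrightarrow> u i = 0"
  shows "quad_form n G u = cnj (u p) * G p p * u p + cnj (u p) * G p q * u q
    + cnj (u q) * G q p * u p + cnj (u q) * G q q * u q"
proof -
  have "(\<Sum>j<n. cnj (u i) * G i j * u j) = cnj (u i) * G i p * u p + cnj (u i) * G i q * u q" for i
    by (rule sum_lessThan_two_support) (use assms in auto)
  then have "quad_form n G u = (\<Sum>i<n. cnj (u i) * G i p * u p + cnj (u i) * G i q * u q)"
    unfolding quad_form_def by simp
  also have "\<dots> = cnj (u p) * G p p * u p + cnj (u p) * G p q * u q + (cnj (u q) * G q p * u p + cnj (u q) * G q q * u q)"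
    by (rule sum_lessThan_two_support) (use assms in auto)
  finally show ?thesis by (simp add: add.assoc)
qed

lemma psd_kernel_diag_nonneg:
  assumes "psd_kernel n G" "i < n"
  shows "0 \<le> G i i"
proof -
  have "quad_form n G (\<lambda>k. (if k = i then 1 else 0) + (if k = i then 0 else 0)) = G i i"
    using quad_form_two_units[OF assms(2) assms(2), of G 0] by simp
  thus ?thesis using assms(1) unfolding psd_kernel_def by metis
qed

lemma psd_kernel_hermitian:
  assumes G: "psd_kernel n G" and "i < n" "j < n"
  shows "G i j = cnj (G j i)"
proof -
  have diag: "0 \<le> G i i" "0 \<le> G j j" using psd_kernel_diag_nonneg[OF G] assms(2,3) by auto
  have "0 \<le> G i i + cnj t * G j i + t * G i j + cnj t * t * G j j" for t
    using G quad_form_two_units[OF assms(2,3), of G t] unfolding psd_kernel_def by metis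
  from this[of 1] this[of \<i>] diag have "Im (G j i + G i j) = 0" "Re (G i j - G j i) = 0"
    by (simp_all add: less_eq_complex_def)
  thus ?thesis by (simp add: complex_eq_iff)
qed

lemma psd_kernel_zero_diag_row:
  assumes G: "psd_kernel n G" and m: "m < n" and j: "j < n" and zero: "G m m = 0"
  shows "G m j = 0"
proof (rule ccontr)
  assume nz: "G m j \<noteq> 0"
  define s where "s = G m j"
  define q where "q = (Re s)\<^sup>2 + (Im s)\<^sup>2"
  have h: "G j m = cnj s" using psd_kernel_hermitian[OF G j m] s_def by simp
  have pos: "q > 0" using nz s_def q_def complex_neq_0 by metis
  have sc: "s * cnj s = complex_of_real q" unfolding q_def by (rule complex_mult_cnj)
  \<comment> \<open>as \<open>G m m = 0\<close>, the form along \<open>e\<^sub>j - R s e\<^sub>m\<close> is affine in \<open>R\<close> with negative slope\<close>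
  define R :: real where "R = (Re (G j j) + 1) / (2 * q)"
  define t where "t = - complex_of_real R * s"
  have "0 \<le> G j j + cnj t * G m j + t * G j m + cnj t * t * G m m"
    using G quad_form_two_units[OF j m, of G t] unfolding psd_kernel_def by metis
  moreover have "G j j + cnj t * G m j + t * G j m + cnj t * t * G m m = G j j - complex_of_real (2 * R * q)"
    using zero sc unfolding t_def s_def[symmetric] h by (simp add: algebra_simps)
  ultimately have "0 \<le> Re (G j j) - 2 * R * q" by (simp add: less_eq_complex_def)
  moreover have "2 * R * q = Re (G j j) + 1" using pos unfolding R_def by simp
  ultimately show False by simp
qed

lemma psd_kernel_restrict: "psd_kernel (Suc m) G \<Longrightarrow> psd_kernel m G"
  unfolding psd_kernel_def
proof
  fix v :: "nat \<Rightarrow> complex"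
  assume G: "\<forall>v. 0 \<le> quad_form (Suc m) G v"
  have "quad_form (Suc m) G (\<lambda>k. if k < m then v k else 0) = quad_form m G v"
    unfolding quad_form_def by simp
  thus "0 \<le> quad_form m G v" using G by metis
qed

lemma psd_kernel_schur_complement:
  assumes G: "psd_kernel n G" and m: "m < n" and nz: "G m m \<noteq> 0"
  shows "psd_kernel n (\<lambda>i j. G i j - G i m * G m j / G m m)"
  unfolding psd_kernel_def
proof
  fix v :: "nat \<Rightarrow> complex"
  define h where "h = G m m"
  have hr: "cnj h = h" using psd_kernel_diag_nonneg[OF G m] unfolding h_def less_eq_complex_def
    by (simp add: complex_eq_iff)
  define S where "S = (\<Sum>j<n. G m j * v j)"
  have S': "(\<Sum>i<n. cnj (v i) * G i m) = cnj S"
    unfolding S_def using psd_kernel_hermitian[OF G _ m] by (auto intro!: sum.cong simp: mult.commute)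
  define c where "c = S / h"
  have "quad_form n (\<lambda>i j. G i j - G i m * G m j / G m m) v
      = quad_form n G v - (\<Sum>i<n. cnj (v i) * G i m) * (\<Sum>j<n. G m j * v j) / h"
  proof -
    have "(\<Sum>i<n. cnj (v i) * G i m) * (\<Sum>j<n. G m j * v j) / h
        = (\<Sum>i<n. \<Sum>j<n. cnj (v i) * (G i m * G m j / h) * v j)"
      unfolding sum_product sum_divide_distrib by (intro sum.cong refl) (simp add: algebra_simps)
    thus ?thesis unfolding quad_form_def h_def by (simp add: algebra_simps sum_subtractf)
  qed
  also have "\<dots> = quad_form n G v - cnj S * S / h" using S' S_def by simp
  also have "\<dots> = quad_form n G (\<lambda>k. v k + (if k = m then - c else 0))"
  proof -
    have hz: "h \<noteq> 0" using nz h_def by simp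
    have cc: "cnj c = cnj S / h" using hr by (simp add: c_def)
    have "quad_form n G (\<lambda>k. v k + (if k = m then - c else 0))
        = quad_form n G v + cnj (- c) * S + (- c) * cnj S + cnj (- c) * (- c) * h"
      using quad_form_shift[OF m, of G v "- c"] S' unfolding S_def[symmetric] h_def[symmetric] by simp
    also have "\<dots> = quad_form n G v - cnj S * S / h"
      unfolding complex_cnj_minus cc unfolding c_def using hz by (simp add: field_simps)
    finally show ?thesis by simp
  qed
  finally show "0 \<le> quad_form n (\<lambda>i j. G i j - G i m * G m j / G m m) v"
    using G unfolding psd_kernel_def by metis
qed

text \<open>Induction on \<open>n\<close>: split \<open>G\<close> into the rank-one part through its last column, which pairs with
  \<open>F\<close> to a value of the quadratic form of \<open>F\<close>, and the Schur complement, whose last row and column vanish.\<close>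
lemma trace_pairing_psd_nonneg: "psd_kernel n F \<Longrightarrow> psd_kernel n G \<Longrightarrow> 0 \<le> trace_pairing n F G"
proof (induction n arbitrary: G)
  case 0
  then show ?case by (simp add: trace_pairing_def)
next
  case (Suc m)
  have F: "psd_kernel m F" using psd_kernel_restrict Suc.prems(1) by blast
  have drop_last: "trace_pairing (Suc m) F H = trace_pairing m F H"
    if "\<And>j. j < Suc m \<Longrightarrow> H m j = 0 \<and> H j m = 0" for H
    unfolding trace_pairing_def using that by simp
  show ?case
  proof (cases "G m m = 0")
    case True
    have "G m j = 0 \<and> G j m = 0" if "j < Suc m" for j
      using psd_kernel_zero_diag_row[OF Suc.prems(2) _ that True] psd_kernel_hermitian[OF Suc.prems(2) that, of m]
      by simp
    then show ?thesis
      using drop_last Suc.IH[OF F psd_kernel_restrict[OF Suc.prems(2)]] by simp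
  next
    case False
    define h where "h = G m m"
    have h: "0 \<le> h" using psd_kernel_diag_nonneg[OF Suc.prems(2), of m] unfolding h_def by simp
    have hpos: "0 < Re h" using h False unfolding h_def less_eq_complex_def
      by (simp add: complex_eq_iff less_eq_real_def)
    have hre: "h = complex_of_real (Re h)" using h by (simp add: less_eq_complex_def complex_eq_iff)
    define G' where "G' = (\<lambda>i j. G i j - G i m * G m j / G m m)"
    have G': "psd_kernel (Suc m) G'"
      unfolding G'_def by (rule psd_kernel_schur_complement[OF Suc.prems(2) _ False]) simp
    have "G' m j = 0 \<and> G' j m = 0" for j unfolding G'_def using False by simp
    hence schur: "0 \<le> trace_pairing (Suc m) F G'"
      using drop_last Suc.IH[OF F psd_kernel_restrict[OF G']] by simp
    define r where "r = complex_of_real (sqrt (Re h))"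
    have rr: "r * r = h" using hpos hre unfolding r_def of_real_mult[symmetric] by simp
    have "trace_pairing (Suc m) F (\<lambda>i j. G i m * G m j / h) = quad_form (Suc m) F (\<lambda>j. G j m / r)"
      unfolding trace_pairing_def quad_form_def
    proof (intro sum.cong refl)
      fix i j assume "i \<in> {..<Suc m}"
      hence "cnj (G i m) = G m i" using psd_kernel_hermitian[OF Suc.prems(2), of m i] by simp
      moreover have "cnj r = r" unfolding r_def by simp
      ultimately show "F i j * (G j m * G m i / h) = cnj (G i m / r) * F i j * (G j m / r)"
        using rr by (simp add: field_simps)
    qed
    hence rank_one: "0 \<le> trace_pairing (Suc m) F (\<lambda>i j. G i m * G m j / h)"
      using Suc.prems(1) unfolding psd_kernel_def by metis
    have "trace_pairing (Suc m) F G = trace_pairing (Suc m) F G' + trace_pairing (Suc m) F (\<lambda>i j. G i m * G m j / h)"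
      unfolding trace_pairing_def G'_def h_def by (simp add: algebra_simps sum.distrib[symmetric])
    thus ?thesis using schur rank_one by simp
  qed
qed

section \<open>Traces and positive semidefinite matrices\<close>

abbreviation entries :: "complex mat \<Rightarrow> nat \<Rightarrow> nat \<Rightarrow> complex" where
  "entries M \<equiv> (\<lambda>i j. M $$ (i, j))"

lemma psd_iff_psd_kernel: "psd n M \<longleftrightarrow> M \<in> carrier_mat n n \<and> psd_kernel n (entries M)"
proof
  assume p: "psd n M"
  hence M: "M \<in> carrier_mat n n" unfolding psd_def by simp
  show "M \<in> carrier_mat n n \<and> psd_kernel n (entries M)"
    unfolding psd_kernel_def
  proof (intro conjI allI M)
    fix w :: "nat \<Rightarrow> complex"
    have "let q = (\<Sum>i<n. cnj (vec n w $ i) * (M *\<^sub>v vec n w) $ i) in Im q = 0 \<and> Re q \<ge> 0"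
      using p vec_carrier unfolding psd_def by blast
    moreover have "(\<Sum>i<n. cnj (vec n w $ i) * (M *\<^sub>v vec n w) $ i) = quad_form n (entries M) w"
      unfolding quad_form_def using M
      by (auto intro!: sum.cong simp: scalar_prod_def sum_distrib_left atLeast0LessThan algebra_simps)
    ultimately show "0 \<le> quad_form n (entries M) w"
      by (auto simp only: Let_def less_eq_complex_def zero_complex.sel)
  qed
next
  assume a: "M \<in> carrier_mat n n \<and> psd_kernel n (entries M)"
  show "psd n M" unfolding psd_def
  proof (intro conjI ballI a[THEN conjunct1])
    fix v :: "complex vec" assume v: "v \<in> carrier_vec n"
    have "(\<Sum>i<n. cnj (v $ i) * (M *\<^sub>v v) $ i) = quad_form n (entries M) (\<lambda>i. v $ i)"
      unfolding quad_form_def using a v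
      by (auto intro!: sum.cong simp: scalar_prod_def sum_distrib_left atLeast0LessThan algebra_simps)
    thus "let q = (\<Sum>i<n. cnj (v $ i) * (M *\<^sub>v v) $ i) in Im q = 0 \<and> Re q \<ge> 0"
      using a unfolding psd_kernel_def less_eq_complex_def Let_def by (metis zero_complex.sel)
  qed
qed

lemma psd_carrier: "psd n M \<Longrightarrow> M \<in> carrier_mat n n"
  by (simp add: psd_def)

lemma mtrace_mult_eq_trace_pairing:
  assumes "A \<in> carrier_mat n n" "B \<in> carrier_mat n n"
  shows "mtrace (A * B) = trace_pairing n (entries A) (entries B)"
  unfolding mtrace_def trace_pairing_def using assms
  by (auto intro!: sum.cong simp: scalar_prod_def atLeast0LessThan)

lemma mtrace_mult_psd_nonneg: "psd n A \<Longrightarrow> psd n B \<Longrightarrow> 0 \<le> mtrace (A * B)"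
  using trace_pairing_psd_nonneg mtrace_mult_eq_trace_pairing unfolding psd_iff_psd_kernel by metis

lemma mtrace_mult_psd_real: "psd n A \<Longrightarrow> psd n B \<Longrightarrow> mtrace (A * B) = complex_of_real (Re (mtrace (A * B)))"
  using mtrace_mult_psd_nonneg nonnegative_complex_is_real of_real_Re by metis

lemma mtrace_mult_psd_product:
  "psd n A \<Longrightarrow> psd n B \<Longrightarrow> psd m C \<Longrightarrow> psd m D \<Longrightarrow>
   mtrace (A * B) * mtrace (C * D) = complex_of_real (Re (mtrace (A * B)) * Re (mtrace (C * D)))"
  using mtrace_mult_psd_real of_real_mult by metis

lemma mtrace_add: "A \<in> carrier_mat n n \<Longrightarrow> B \<in> carrier_mat n n \<Longrightarrow> mtrace (A + B) = mtrace A + mtrace B"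
  unfolding mtrace_def by (simp add: sum.distrib)

lemma mtrace_add_mult:
  "A \<in> carrier_mat n n \<Longrightarrow> B \<in> carrier_mat n n \<Longrightarrow> C \<in> carrier_mat n n \<Longrightarrow>
   mtrace ((A + B) * C) = mtrace (A * C) + mtrace (B * C)"
  by (simp add: add_mult_distrib_mat mtrace_add[of _ n])

lemma mtrace_mult_weighted_sum:
  fixes p q r :: "nat \<Rightarrow> complex"
  assumes K: "K \<in> carrier_mat D D"
    and T: "\<And>l. l < n \<Longrightarrow> X l \<in> carrier_mat D D \<and> Y l \<in> carrier_mat D D \<and> Z l \<in> carrier_mat D D"
  shows "mtrace (K * mat D D (\<lambda>ij. \<Sum>l<n. p l * X l $$ ij + q l * Y l $$ ij + r l * Z l $$ ij)) =
    (\<Sum>l<n. p l * mtrace (K * X l) + q l * mtrace (K * Y l) + r l * mtrace (K * Z l))"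
proof -
  let ?M = "mat D D (\<lambda>ij. \<Sum>l<n. p l * X l $$ ij + q l * Y l $$ ij + r l * Z l $$ ij)"
  have "mtrace (K * ?M) = trace_pairing D (entries K) (entries ?M)" by (rule mtrace_mult_eq_trace_pairing[OF K]) simp
  also have "\<dots> = (\<Sum>i<D. \<Sum>j<D. \<Sum>l<n. K $$ (i,j) * (p l * X l $$ (j,i) + q l * Y l $$ (j,i) + r l * Z l $$ (j,i)))"
    unfolding trace_pairing_def by (intro sum.cong refl) (simp add: sum_distrib_left)
  also have "\<dots> = (\<Sum>i<D. \<Sum>l<n. \<Sum>j<D. K $$ (i,j) * (p l * X l $$ (j,i) + q l * Y l $$ (j,i) + r l * Z l $$ (j,i)))"
    by (rule sum.cong[OF refl], rule sum.swap)
  also have "\<dots> = (\<Sum>l<n. \<Sum>i<D. \<Sum>j<D. K $$ (i,j) * (p l * X l $$ (j,i) + q l * Y l $$ (j,i) + r l * Z l $$ (j,i)))"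
    by (rule sum.swap)
  also have "\<dots> = (\<Sum>l<n. p l * trace_pairing D (entries K) (entries (X l))
      + q l * trace_pairing D (entries K) (entries (Y l)) + r l * trace_pairing D (entries K) (entries (Z l)))"
    unfolding trace_pairing_def by (simp add: sum.distrib sum_distrib_left algebra_simps)
  also have "\<dots> = (\<Sum>l<n. p l * mtrace (K * X l) + q l * mtrace (K * Y l) + r l * mtrace (K * Z l))"
    using T mtrace_mult_eq_trace_pairing[OF K] by (intro sum.cong refl) simp
  finally show ?thesis .
qed

lemma psd_add: "psd n A \<Longrightarrow> psd n B \<Longrightarrow> psd n (A + B)"
proof -
  assume "psd n A" "psd n B"
  then have A: "A \<in> carrier_mat n n" "psd_kernel n (entries A)"
    and B: "B \<in> carrier_mat n n" "psd_kernel n (entries B)"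
    unfolding psd_iff_psd_kernel by auto
  have "quad_form n (entries (A + B)) v = quad_form n (entries A) v + quad_form n (entries B) v" for v
    unfolding quad_form_def using B(1) by (simp add: algebra_simps sum.distrib)
  then have "psd_kernel n (entries (A + B))"
    using A(2) B(2) unfolding psd_kernel_def by (simp add: add_nonneg_nonneg)
  then show ?thesis unfolding psd_iff_psd_kernel using A(1) B(1) by simp
qed

lemma psd_zero_mat: "psd n (0\<^sub>m n n)"
  unfolding psd_iff_psd_kernel psd_kernel_def quad_form_def by simp

lemma psd_diag_mat:
  assumes "\<And>i. i < n \<Longrightarrow> 0 \<le> f i"
  shows "psd n (mat n n (\<lambda>(i, j). if i = j then complex_of_real (f i) else 0))" (is "psd n ?D")
proof -
  have row: "(\<Sum>j<n. cnj (v i) * ?D $$ (i, j) * v j) = complex_of_real (f i) * (v i * cnj (v i))"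
    if "i < n" for i v
  proof -
    have "(\<Sum>j<n. cnj (v i) * ?D $$ (i, j) * v j) = (\<Sum>j<n. if j = i then cnj (v i) * f i * v i else 0)"
      using that by (intro sum.cong refl) auto
    then show ?thesis using that by (simp add: mult_ac)
  qed
  have "0 \<le> complex_of_real (f i) * (v i * cnj (v i))" if "i < n" for i v
    using assms[OF that] unfolding complex_mult_cnj by (simp add: less_eq_complex_def)
  then show ?thesis
    unfolding psd_iff_psd_kernel psd_kernel_def quad_form_def using row by (auto intro!: sum_nonneg)
qed

definition rank_one :: "nat \<Rightarrow> real \<Rightarrow> (nat \<Rightarrow> complex) \<Rightarrow> complex mat" where
  "rank_one n c u = mat n n (\<lambda>(i, j). complex_of_real c * u i * cnj (u j))"

lemma rank_one_carrier [simp]: "rank_one n c u \<in> carrier_mat n n"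
  and rank_one_dim [simp]: "dim_row (rank_one n c u) = n" "dim_col (rank_one n c u) = n"
  by (simp_all add: rank_one_def)

lemma rank_one_index [simp]: "i < n \<Longrightarrow> j < n \<Longrightarrow> rank_one n c u $$ (i, j) = complex_of_real c * u i * cnj (u j)"
  by (simp add: rank_one_def)

lemma mtrace_rank_one: "mtrace (rank_one n c u) = complex_of_real c * (\<Sum>i<n. u i * cnj (u i))"
  unfolding mtrace_def by (simp add: sum_distrib_left mult.assoc)

lemma mtrace_mult_rank_one:
  "K \<in> carrier_mat n n \<Longrightarrow> mtrace (K * rank_one n c u) = complex_of_real c * quad_form n (entries K) u"
  by (simp add: mtrace_mult_eq_trace_pairing trace_pairing_def quad_form_def sum_distrib_left algebra_simps)

lemma psd_rank_one:
  assumes "0 \<le> c" shows "psd n (rank_one n c u)"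
  unfolding psd_iff_psd_kernel psd_kernel_def
proof (intro conjI allI rank_one_carrier)
  fix v :: "nat \<Rightarrow> complex"
  define S where "S = (\<Sum>i<n. cnj (v i) * u i)"
  have sc: "S * cnj S = (\<Sum>i<n. \<Sum>j<n. (cnj (v i) * u i) * (v j * cnj (u j)))"
    unfolding S_def cnj_sum by (simp add: sum_product)
  have "quad_form n (entries (rank_one n c u)) v = complex_of_real c * (S * cnj S)"
    unfolding sc quad_form_def sum_distrib_left by (intro sum.cong refl) (simp add: algebra_simps)
  also have "\<dots> = complex_of_real (c * ((Re S)\<^sup>2 + (Im S)\<^sup>2))" by (simp add: complex_mult_cnj)
  finally show "0 \<le> quad_form n (entries (rank_one n c u)) v"
    using assms by (simp add: less_eq_complex_def)
qed

lemma density_carrier: "density n \<rho> \<Longrightarrow> \<rho> \<in> carrier_mat n n"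
  by (simp add: density_def psd_def)

lemma density_psd: "density n \<rho> \<Longrightarrow> psd n \<rho>"
  by (simp add: density_def)

lemma density_unit:
  assumes "k < n" shows "density n (rank_one n 1 (unit_fun k))"
proof -
  have "(\<Sum>i<n. unit_fun k i * cnj (unit_fun k i)) = (\<Sum>i<n. if i = k then 1 else 0)"
    by (intro sum.cong refl) (simp add: unit_fun_def)
  then show ?thesis
    using assms unfolding density_def mtrace_rank_one by (simp add: psd_rank_one)
qed

lemma povm2_carrier: "povm2 n N \<Longrightarrow> N 0 \<in> carrier_mat n n \<and> N 1 \<in> carrier_mat n n"
  unfolding povm2_def psd_def by simp

lemma povm2_psd: "povm2 n N \<Longrightarrow> b \<in> {0, 1} \<Longrightarrow> psd n (N b)"
  unfolding povm2_def by auto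

section \<open>Kronecker products\<close>

lemma sum_lessThan_mult: "(\<Sum>i<m * n. f i) = (\<Sum>a<m. \<Sum>b<n. f (a * n + b :: nat))"
proof (induction m)
  case (Suc m)
  have "{..<Suc m * n} = {..<m * n} \<union> {m * n..<m * n + n}" by auto
  moreover have "(\<Sum>i\<in>{m * n..<m * n + n}. f i) = (\<Sum>b<n. f (m * n + b))"
    using sum.shift_bounds_nat_ivl[of f 0 "m * n" n] by (simp add: atLeast0LessThan add.commute)
  ultimately show ?case using Suc by (simp add: sum.union_disjoint ivl_disj_int)
qed simp

lemma sum_lessThan_mult_div_mod: "(\<Sum>i<m * n. g (i div n) (i mod n)) = (\<Sum>a<m. \<Sum>b<n. g a (b :: nat))"
  unfolding sum_lessThan_mult by (intro sum.cong refl) simp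

lemma double_sum_lessThan_mult_div_mod:
  "(\<Sum>i<m * n. \<Sum>j<m * n. F (i div n) (i mod n) (j div n) (j mod n))
    = (\<Sum>a<m. \<Sum>b<n. \<Sum>a'<m. \<Sum>b'<n. F a b a' (b' :: nat))"
proof -
  have "(\<Sum>j<m * n. F (i div n) (i mod n) (j div n) (j mod n))
      = (\<Sum>a'<m. \<Sum>b'<n. F (i div n) (i mod n) a' b')" for i
    by (rule sum_lessThan_mult_div_mod)
  then show ?thesis
    using sum_lessThan_mult_div_mod[where g = "\<lambda>a b. \<Sum>a'<m. \<Sum>b'<n. F a b a' b'"] by simp
qed

lemma sum_lessThan_mult3_div_mod:
  "(\<Sum>i<m * n * k. G (i div k div n) (i div k mod n) (i mod k)) = (\<Sum>a<m. \<Sum>b<n. \<Sum>c<k. G a b (c :: nat))"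
  using sum_lessThan_mult_div_mod[where m = "m * n" and n = k and g = "\<lambda>p c. G (p div n) (p mod n) c"]
    sum_lessThan_mult_div_mod[where m = m and n = n and g = "\<lambda>a b. \<Sum>c<k. G a b c"]
  by simp

lemma double_sum_lessThan_mult3_div_mod:
  "(\<Sum>i<m * n * k. \<Sum>j<m * n * k.
      F (i div k div n) (i div k mod n) (i mod k) (j div k div n) (j div k mod n) (j mod k))
    = (\<Sum>a<m. \<Sum>b<n. \<Sum>c<k. \<Sum>a'<m. \<Sum>b'<n. \<Sum>c'<k. F a b c a' b' (c' :: nat))"
proof -
  have "(\<Sum>j<m * n * k. F (i div k div n) (i div k mod n) (i mod k) (j div k div n) (j div k mod n) (j mod k))
      = (\<Sum>a'<m. \<Sum>b'<n. \<Sum>c'<k. F (i div k div n) (i div k mod n) (i mod k) a' b' c')" for i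
    by (rule sum_lessThan_mult3_div_mod)
  then show ?thesis
    using sum_lessThan_mult3_div_mod[where G = "\<lambda>a b c. \<Sum>a'<m. \<Sum>b'<n. \<Sum>c'<k. F a b c a' b' c'"]
    by simp
qed

lemma sum4_reorder_bdac:
  "(\<Sum>a\<in>A. \<Sum>b\<in>B. \<Sum>c\<in>C. \<Sum>d\<in>D. f a b c d) = (\<Sum>b\<in>B. \<Sum>d\<in>D. \<Sum>a\<in>A. \<Sum>c\<in>C. f a b c d)"
proof -
  have "(\<Sum>a\<in>A. \<Sum>b\<in>B. \<Sum>c\<in>C. \<Sum>d\<in>D. f a b c d) = (\<Sum>b\<in>B. \<Sum>a\<in>A. \<Sum>c\<in>C. \<Sum>d\<in>D. f a b c d)"
    by (rule sum.swap)
  also have "\<dots> = (\<Sum>b\<in>B. \<Sum>a\<in>A. \<Sum>d\<in>D. \<Sum>c\<in>C. f a b c d)"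
    by (rule sum.cong[OF refl], rule sum.cong[OF refl], rule sum.swap)
  also have "\<dots> = (\<Sum>b\<in>B. \<Sum>d\<in>D. \<Sum>a\<in>A. \<Sum>c\<in>C. f a b c d)"
    by (rule sum.cong[OF refl], rule sum.swap)
  finally show ?thesis .
qed

lemma sum4_reorder_dcab:
  "(\<Sum>a\<in>A. \<Sum>b\<in>B. \<Sum>c\<in>C. \<Sum>d\<in>D. f a b c d) = (\<Sum>d\<in>D. \<Sum>c\<in>C. \<Sum>a\<in>A. \<Sum>b\<in>B. f a b c d)"
proof -
  have "(\<Sum>a\<in>A. \<Sum>b\<in>B. \<Sum>c\<in>C. \<Sum>d\<in>D. f a b c d) = (\<Sum>a\<in>A. \<Sum>b\<in>B. \<Sum>d\<in>D. \<Sum>c\<in>C. f a b c d)"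
    by (rule sum.cong[OF refl], rule sum.cong[OF refl], rule sum.swap)
  also have "\<dots> = (\<Sum>a\<in>A. \<Sum>d\<in>D. \<Sum>b\<in>B. \<Sum>c\<in>C. f a b c d)"
    by (rule sum.cong[OF refl], rule sum.swap)
  also have "\<dots> = (\<Sum>d\<in>D. \<Sum>a\<in>A. \<Sum>b\<in>B. \<Sum>c\<in>C. f a b c d)" by (rule sum.swap)
  also have "\<dots> = (\<Sum>d\<in>D. \<Sum>a\<in>A. \<Sum>c\<in>C. \<Sum>b\<in>B. f a b c d)"
    by (rule sum.cong[OF refl], rule sum.cong[OF refl], rule sum.swap)
  also have "\<dots> = (\<Sum>d\<in>D. \<Sum>c\<in>C. \<Sum>a\<in>A. \<Sum>b\<in>B. f a b c d)"
    by (rule sum.cong[OF refl], rule sum.swap)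
  finally show ?thesis .
qed

lemma sum6_reorder_acacbb:
  "(\<Sum>a\<in>A1. \<Sum>b\<in>B1. \<Sum>c\<in>C1. \<Sum>a'\<in>A2. \<Sum>b'\<in>B2. \<Sum>c'\<in>C2. f a b c a' b' c') =
   (\<Sum>a\<in>A1. \<Sum>c\<in>C1. \<Sum>a'\<in>A2. \<Sum>c'\<in>C2. \<Sum>b\<in>B1. \<Sum>b'\<in>B2. f a b c a' b' c')"
proof (rule sum.cong[OF refl])
  fix a
  have s1: "(\<Sum>b\<in>B1. \<Sum>c\<in>C1. \<Sum>a'\<in>A2. \<Sum>b'\<in>B2. \<Sum>c'\<in>C2. f a b c a' b' c') =
     (\<Sum>c\<in>C1. \<Sum>b\<in>B1. \<Sum>a'\<in>A2. \<Sum>b'\<in>B2. \<Sum>c'\<in>C2. f a b c a' b' c')" by (rule sum.swap)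
  have s2: "(\<Sum>b\<in>B1. \<Sum>a'\<in>A2. \<Sum>b'\<in>B2. \<Sum>c'\<in>C2. f a b c a' b' c') =
     (\<Sum>a'\<in>A2. \<Sum>b\<in>B1. \<Sum>b'\<in>B2. \<Sum>c'\<in>C2. f a b c a' b' c')" for c by (rule sum.swap)
  have s3: "(\<Sum>b\<in>B1. \<Sum>b'\<in>B2. \<Sum>c'\<in>C2. f a b c a' b' c') =
     (\<Sum>c'\<in>C2. \<Sum>b\<in>B1. \<Sum>b'\<in>B2. f a b c a' b' c')" for c a'
  proof -
    have "(\<Sum>b\<in>B1. \<Sum>b'\<in>B2. \<Sum>c'\<in>C2. f a b c a' b' c') = (\<Sum>b\<in>B1. \<Sum>c'\<in>C2. \<Sum>b'\<in>B2. f a b c a' b' c')"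
      by (rule sum.cong[OF refl], rule sum.swap)
    also have "\<dots> = (\<Sum>c'\<in>C2. \<Sum>b\<in>B1. \<Sum>b'\<in>B2. f a b c a' b' c')" by (rule sum.swap)
    finally show ?thesis .
  qed
  show "(\<Sum>b\<in>B1. \<Sum>c\<in>C1. \<Sum>a'\<in>A2. \<Sum>b'\<in>B2. \<Sum>c'\<in>C2. f a b c a' b' c') =
     (\<Sum>c\<in>C1. \<Sum>a'\<in>A2. \<Sum>c'\<in>C2. \<Sum>b\<in>B1. \<Sum>b'\<in>B2. f a b c a' b' c')"
    unfolding s1 s2 s3 ..
qed

lemma div_mod_mult_assoc:
  assumes "i < a * (b * (c :: nat))"
  shows "i div c div b = i div (b * c)" "i div c mod b = i mod (b * c) div c"
    "i mod (b * c) mod c = i mod c" "i mod (b * c) < b * c" "i div c < a * b"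
proof -
  have c: "c > 0" and b: "b > 0" using assms by (auto intro: gr0I)
  have m: "i mod (c * b) = c * (i div c mod b) + i mod c" by (rule mod_mult2_eq)
  show "i div c div b = i div (b * c)" by (metis div_mult2_eq mult.commute)
  show "i div c mod b = i mod (b * c) div c" "i mod (b * c) mod c = i mod c"
    using m c by (simp_all add: mult.commute)
  show "i mod (b * c) < b * c" using b c by simp
  show "i div c < a * b" using assms c by (simp add: div_less_iff_less_mult mult.assoc)
qed

lemma kron_dim [simp]:
  "dim_row (kron A B) = dim_row A * dim_row B" "dim_col (kron A B) = dim_col A * dim_col B"
  by (simp_all add: kron_def)

lemma kron_index [simp]:
  "i < dim_row A * dim_row B \<Longrightarrow> j < dim_col A * dim_col B \<Longrightarrow>
   kron A B $$ (i, j) = A $$ (i div dim_row B, j div dim_col B) * B $$ (i mod dim_row B, j mod dim_col B)"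
  by (simp add: kron_def)

lemma kron_carrier: "A \<in> carrier_mat m m \<Longrightarrow> B \<in> carrier_mat n n \<Longrightarrow> kron A B \<in> carrier_mat (m * n) (m * n)"
  unfolding carrier_mat_def by simp

lemma kron_assoc: "kron (kron A B) C = kron A (kron B C)"
proof (rule eq_matI)
  fix i j assume "i < dim_row (kron A (kron B C))" "j < dim_col (kron A (kron B C))"
  then have i: "i < dim_row A * (dim_row B * dim_row C)" and j: "j < dim_col A * (dim_col B * dim_col C)"
    by simp_all
  note I = div_mod_mult_assoc[OF i] and J = div_mod_mult_assoc[OF j]
  have "kron (kron A B) C $$ (i, j)
      = A $$ (i div dim_row C div dim_row B, j div dim_col C div dim_col B) *
        B $$ (i div dim_row C mod dim_row B, j div dim_col C mod dim_col B) * C $$ (i mod dim_row C, j mod dim_col C)"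
    using i j I(5) J(5) by (simp add: mult.assoc)
  also have "\<dots> = kron A (kron B C) $$ (i, j)"
    using i j I J by simp
  finally show "kron (kron A B) C $$ (i, j) = kron A (kron B C) $$ (i, j)" .
qed simp_all

lemma kron_add_left: "A \<in> carrier_mat m m \<Longrightarrow> B \<in> carrier_mat m m \<Longrightarrow> kron (A + B) C = kron A C + kron B C"
proof (rule eq_matI)
  fix i j assume A: "A \<in> carrier_mat m m" and B: "B \<in> carrier_mat m m"
    and i: "i < dim_row (kron A C + kron B C)" and j: "j < dim_col (kron A C + kron B C)"
  have "i div dim_row C < m" "j div dim_col C < m" using i j A B by (simp_all add: less_mult_imp_div_less)
  then show "kron (A + B) C $$ (i, j) = (kron A C + kron B C) $$ (i, j)" using A B i j by (simp add: algebra_simps)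
qed simp_all

lemma kron_add_right: "C \<in> carrier_mat m m \<Longrightarrow> D \<in> carrier_mat m m \<Longrightarrow> kron A (C + D) = kron A C + kron A D"
proof (rule eq_matI)
  fix i j assume C: "C \<in> carrier_mat m m" and D: "D \<in> carrier_mat m m"
    and i: "i < dim_row (kron A C + kron A D)" and j: "j < dim_col (kron A C + kron A D)"
  have "m > 0" using i D by (cases m) auto
  then have "i mod m < m" "j mod m < m" by simp_all
  then show "kron A (C + D) $$ (i, j) = (kron A C + kron A D) $$ (i, j)" using C D i j by (simp add: algebra_simps)
qed simp_all

lemma kron_one: "kron (1\<^sub>m m) (1\<^sub>m n) = 1\<^sub>m (m * n)"
proof (rule eq_matI)
  fix i j assume "i < dim_row (1\<^sub>m (m * n))" "j < dim_col (1\<^sub>m (m * n))"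
  then have i: "i < m * n" and j: "j < m * n" by simp_all
  then have "n > 0" by (cases n) auto
  then have "i div n < m" "j div n < m" "i mod n < n" "j mod n < n"
    using i j by (simp_all add: less_mult_imp_div_less)
  moreover have "i div n = j div n \<and> i mod n = j mod n \<longleftrightarrow> i = j"
    by (metis div_mult_mod_eq)
  ultimately show "kron (1\<^sub>m m) (1\<^sub>m n) $$ (i, j) = 1\<^sub>m (m * n) $$ (i, j)"
    using i j by auto
qed simp_all

lemma povm2_kron:
  assumes M: "povm2 m M" and N: "povm2 n N"
  shows "kron (M 0) (N 0) + kron (M 0) (N 1) + kron (M 1) (N 0) + kron (M 1) (N 1) = 1\<^sub>m (m * n)"
proof -
  have C: "kron (M a) (N b) \<in> carrier_mat (m * n) (m * n)" if "a \<in> {0, 1}" "b \<in> {0, 1}" for a b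
    using that povm2_carrier[OF M] povm2_carrier[OF N] by (auto intro: kron_carrier)
  have "kron (M 0) (N 0) + kron (M 0) (N 1) + kron (M 1) (N 0) + kron (M 1) (N 1)
      = kron (M 0) (N 0) + kron (M 0) (N 1) + (kron (M 1) (N 0) + kron (M 1) (N 1))"
    by (rule assoc_add_mat[where nr = "m * n" and nc = "m * n"]) (use C in auto)
  also have "\<dots> = kron (M 0) (N 0 + N 1) + kron (M 1) (N 0 + N 1)"
    using povm2_carrier[OF N] by (simp add: kron_add_right[of _ n])
  also have "\<dots> = kron (M 0 + M 1) (1\<^sub>m n)"
    using povm2_carrier[OF M] N unfolding povm2_def by (simp add: kron_add_left[of _ m])
  finally show ?thesis using M kron_one unfolding povm2_def by simp
qed

lemma mtrace_kron_mult:
  assumes P: "P \<in> carrier_mat m m" and X: "X \<in> carrier_mat m m"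
    and Q: "Q \<in> carrier_mat n n" and Y: "Y \<in> carrier_mat n n"
  shows "mtrace (kron P Q * kron X Y) = mtrace (P * X) * mtrace (Q * Y)"
proof -
  have dims: "dim_row P = m" "dim_col P = m" "dim_row X = m" "dim_col X = m"
    "dim_row Q = n" "dim_col Q = n" "dim_row Y = n" "dim_col Y = n" using assms by auto
  have "mtrace (kron P Q * kron X Y) = trace_pairing (m * n) (entries (kron P Q)) (entries (kron X Y))"
    by (rule mtrace_mult_eq_trace_pairing) (use assms kron_carrier in auto)
  also have "\<dots> = (\<Sum>i<m * n. \<Sum>j<m * n. (\<lambda>a b a' b'. P $$ (a, a') * Q $$ (b, b') * (X $$ (a', a) * Y $$ (b', b)))
          (i div n) (i mod n) (j div n) (j mod n))"
    unfolding trace_pairing_def by (intro sum.cong refl) (simp add: dims)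
  also have "\<dots> = (\<Sum>a<m. \<Sum>b<n. \<Sum>a'<m. \<Sum>b'<n. P $$ (a, a') * Q $$ (b, b') * (X $$ (a', a) * Y $$ (b', b)))"
    by (rule double_sum_lessThan_mult_div_mod)
  also have "\<dots> = (\<Sum>a<m. \<Sum>a'<m. \<Sum>b<n. \<Sum>b'<n. P $$ (a, a') * Q $$ (b, b') * (X $$ (a', a) * Y $$ (b', b)))"
    by (rule sum.cong[OF refl], rule sum.swap)
  also have "\<dots> = (\<Sum>a<m. \<Sum>a'<m. P $$ (a, a') * X $$ (a', a) * trace_pairing n (entries Q) (entries Y))"
    unfolding trace_pairing_def by (simp add: sum_distrib_left algebra_simps)
  also have "\<dots> = trace_pairing m (entries P) (entries X) * trace_pairing n (entries Q) (entries Y)"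
    unfolding trace_pairing_def[of m] by (simp add: sum_distrib_right)
  also have "\<dots> = mtrace (P * X) * mtrace (Q * Y)"
    using mtrace_mult_eq_trace_pairing[OF P X] mtrace_mult_eq_trace_pairing[OF Q Y] by simp
  finally show ?thesis .
qed

lemma psd_kernel_partial_quad_form:
  assumes P: "psd_kernel m P"
  shows "psd_kernel n (\<lambda>b' b. \<Sum>a<m. \<Sum>a'<m. cnj (v (a * n + b)) * P a a' * v (a' * n + b'))" (is "psd_kernel n ?W")
  unfolding psd_kernel_def
proof
  fix w :: "nat \<Rightarrow> complex"
  define u where "u a = (\<Sum>j<n. v (a * n + j) * cnj (w j))" for a
  have "quad_form m P u
      = (\<Sum>a<m. \<Sum>a'<m. \<Sum>j<n. \<Sum>i<n. cnj (w i) * (cnj (v (a * n + j)) * P a a' * v (a' * n + i)) * w j)"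
    unfolding quad_form_def u_def by (simp add: sum_distrib_left sum_distrib_right algebra_simps)
  also have "\<dots> = (\<Sum>i<n. \<Sum>j<n. \<Sum>a<m. \<Sum>a'<m. cnj (w i) * (cnj (v (a * n + j)) * P a a' * v (a' * n + i)) * w j)"
    by (rule sum4_reorder_dcab)
  also have "\<dots> = quad_form n ?W w"
    unfolding quad_form_def by (simp add: sum_distrib_left sum_distrib_right)
  finally show "0 \<le> quad_form n ?W w" using P unfolding psd_kernel_def by metis
qed

text \<open>The quadratic form of \<open>P \<otimes> Q\<close> is the trace pairing of \<open>Q\<close> with a partial quadratic form of \<open>P\<close>.\<close>
lemma psd_kron:
  assumes P: "psd m P" and Q: "psd n Q"
  shows "psd (m * n) (kron P Q)"
proof -
  have Pc: "P \<in> carrier_mat m m" and Pk: "psd_kernel m (entries P)" using P unfolding psd_iff_psd_kernel by auto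
  have Qc: "Q \<in> carrier_mat n n" and Qk: "psd_kernel n (entries Q)" using Q unfolding psd_iff_psd_kernel by auto
  have dims: "dim_row P = m" "dim_col P = m" "dim_row Q = n" "dim_col Q = n" using Pc Qc by auto
  have "0 \<le> quad_form (m * n) (entries (kron P Q)) v" for v
  proof -
    let ?W = "\<lambda>b' b. \<Sum>a<m. \<Sum>a'<m. cnj (v (a * n + b)) * P $$ (a, a') * v (a' * n + b')"
    have "quad_form (m * n) (entries (kron P Q)) v = (\<Sum>i<m * n. \<Sum>j<m * n.
        (\<lambda>a b a' b'. cnj (v (a * n + b)) * P $$ (a, a') * Q $$ (b, b') * v (a' * n + b'))
          (i div n) (i mod n) (j div n) (j mod n))"
      unfolding quad_form_def by (intro sum.cong refl) (simp add: dims)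
    also have "\<dots> = (\<Sum>a<m. \<Sum>b<n. \<Sum>a'<m. \<Sum>b'<n. cnj (v (a * n + b)) * P $$ (a, a') * Q $$ (b, b') * v (a' * n + b'))"
      by (rule double_sum_lessThan_mult_div_mod)
    also have "\<dots> = (\<Sum>b<n. \<Sum>b'<n. \<Sum>a<m. \<Sum>a'<m. cnj (v (a * n + b)) * P $$ (a, a') * Q $$ (b, b') * v (a' * n + b'))"
      by (rule sum4_reorder_bdac)
    also have "\<dots> = trace_pairing n (entries Q) ?W"
      unfolding trace_pairing_def by (simp add: sum_distrib_left algebra_simps)
    finally show ?thesis
      using trace_pairing_psd_nonneg[OF Qk psd_kernel_partial_quad_form[OF Pk]] by simp
  qed
  then show ?thesis unfolding psd_iff_psd_kernel psd_kernel_def using kron_carrier[OF Pc Qc] by simp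
qed

lemma mtrace_kron3_mult_kron_A_BC:
  assumes "A \<in> carrier_mat m m" "B \<in> carrier_mat n n" "C \<in> carrier_mat k k"
    "X \<in> carrier_mat m m" "Y \<in> carrier_mat (n * k) (n * k)"
  shows "mtrace (kron (kron A B) C * kron X Y) = mtrace (A * X) * mtrace (kron B C * Y)"
  unfolding kron_assoc using mtrace_kron_mult[OF assms(1,4) kron_carrier[OF assms(2,3)] assms(5)] .

lemma mtrace_kron3_mult_kron_AB_C:
  assumes "A \<in> carrier_mat m m" "B \<in> carrier_mat n n" "C \<in> carrier_mat k k"
    "X \<in> carrier_mat (m * n) (m * n)" "Y \<in> carrier_mat k k"
  shows "mtrace (kron (kron A B) C * kron X Y) = mtrace (kron A B * X) * mtrace (C * Y)"
  using mtrace_kron_mult[OF kron_carrier[OF assms(1,2)] assms(4,3,5)] .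

lemma trace_pairing_kron:
  assumes A: "A \<in> carrier_mat m m" and C: "C \<in> carrier_mat n n"
  shows "trace_pairing (m * n) (entries (kron A C)) (entries X)
    = (\<Sum>a<m. \<Sum>c<n. \<Sum>a'<m. \<Sum>c'<n. A $$ (a, a') * C $$ (c, c') * X $$ (a' * n + c', a * n + c))"
proof -
  have dims: "dim_row A = m" "dim_col A = m" "dim_row C = n" "dim_col C = n" using assms by auto
  have "trace_pairing (m * n) (entries (kron A C)) (entries X) = (\<Sum>i<m * n. \<Sum>j<m * n.
      (\<lambda>a c a' c'. A $$ (a, a') * C $$ (c, c') * X $$ (a' * n + c', a * n + c)) (i div n) (i mod n) (j div n) (j mod n))"
    unfolding trace_pairing_def by (intro sum.cong refl) (simp add: dims mult.commute[of _ n])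
  also have "\<dots> = (\<Sum>a<m. \<Sum>c<n. \<Sum>a'<m. \<Sum>c'<n. A $$ (a, a') * C $$ (c, c') * X $$ (a' * n + c', a * n + c))"
    by (rule double_sum_lessThan_mult_div_mod)
  finally show ?thesis .
qed

lemma mtrace_kron3_mult_prod_AC_B:
  assumes A: "A \<in> carrier_mat 2 2" and B: "B \<in> carrier_mat d d" and C: "C \<in> carrier_mat d d"
    and X: "X \<in> carrier_mat (2 * d) (2 * d)" and Y: "Y \<in> carrier_mat d d"
  shows "mtrace (kron (kron A B) C * prod_AC_B d X Y) = mtrace (kron A C * X) * mtrace (B * Y)"
proof -
  have dims: "dim_row A = 2" "dim_col A = 2" "dim_row B = d" "dim_col B = d" "dim_row C = d" "dim_col C = d"
    using assms by auto
  define F where "F a b c a' b' c' = A $$ (a, a') * B $$ (b, b') * C $$ (c, c') *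
    (X $$ (a' * d + c', a * d + c) * Y $$ (b', b))" for a b c a' b' c'
  have "mtrace (kron (kron A B) C * prod_AC_B d X Y)
      = trace_pairing (2 * d * d) (entries (kron (kron A B) C)) (entries (prod_AC_B d X Y))"
    by (rule mtrace_mult_eq_trace_pairing) (use kron_carrier[OF kron_carrier[OF A B] C] in \<open>simp_all add: prod_AC_B_def\<close>)
  also have "\<dots> = (\<Sum>i<2 * d * d. \<Sum>j<2 * d * d.
      F (i div d div d) (i div d mod d) (i mod d) (j div d div d) (j div d mod d) (j mod d))"
    unfolding trace_pairing_def
  proof (intro sum.cong refl)
    fix i j assume "i \<in> {..<2 * d * d}" "j \<in> {..<2 * d * d}"
    then have i: "i < 2 * (d * d)" and j: "j < 2 * (d * d)" by (simp_all add: mult.assoc)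
    note I = div_mod_mult_assoc[OF i] and J = div_mod_mult_assoc[OF j]
    show "kron (kron A B) C $$ (i, j) * prod_AC_B d X Y $$ (j, i) =
      F (i div d div d) (i div d mod d) (i mod d) (j div d div d) (j div d mod d) (j mod d)"
      using i j I(5) J(5) unfolding F_def prod_AC_B_def idxA_def idxB_def idxC_def
      by (simp add: dims mult.assoc I(1) J(1))
  qed
  also have "\<dots> = (\<Sum>a<2. \<Sum>b<d. \<Sum>c<d. \<Sum>a'<2. \<Sum>b'<d. \<Sum>c'<d. F a b c a' b' c')"
    by (rule double_sum_lessThan_mult3_div_mod)
  also have "\<dots> = (\<Sum>a<2. \<Sum>c<d. \<Sum>a'<2. \<Sum>c'<d. \<Sum>b<d. \<Sum>b'<d. F a b c a' b' c')"
    by (rule sum6_reorder_acacbb)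
  also have "\<dots> = (\<Sum>a<2. \<Sum>c<d. \<Sum>a'<2. \<Sum>c'<d.
      A $$ (a, a') * C $$ (c, c') * X $$ (a' * d + c', a * d + c)) * trace_pairing d (entries B) (entries Y)"
    unfolding F_def trace_pairing_def by (simp add: sum_distrib_left sum_distrib_right algebra_simps)
  also have "\<dots> = mtrace (kron A C * X) * mtrace (B * Y)"
    unfolding trace_pairing_kron[OF A C, symmetric]
    using mtrace_mult_eq_trace_pairing[OF kron_carrier[OF A C] X] mtrace_mult_eq_trace_pairing[OF B Y] by simp
  finally show ?thesis .
qed

section \<open>The Svetlichny expression\<close>

definition svetlichny :: "behaviour \<Rightarrow> real" where
  "svetlichny P = (\<Sum>a\<in>{0,1}. \<Sum>b\<in>{0,1}. \<Sum>c\<in>{0,1}. \<Sum>x\<in>{0,1}. \<Sum>y\<in>{0,1}. \<Sum>z\<in>{0,1}.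
      (-1) ^ (a + b + c + x * y + y * z + x * z) * P a b c x y z)"

definition cond_distr1 :: "(nat \<Rightarrow> nat \<Rightarrow> real) \<Rightarrow> bool" where
  "cond_distr1 \<alpha> \<longleftrightarrow> (\<forall>a\<in>{0,1}. \<forall>x\<in>{0,1}. 0 \<le> \<alpha> a x) \<and> (\<forall>x\<in>{0,1}. \<alpha> 0 x + \<alpha> 1 x = 1)"

definition cond_distr2 :: "(nat \<Rightarrow> nat \<Rightarrow> nat \<Rightarrow> nat \<Rightarrow> real) \<Rightarrow> bool" where
  "cond_distr2 \<beta> \<longleftrightarrow> (\<forall>b\<in>{0,1}. \<forall>c\<in>{0,1}. \<forall>y\<in>{0,1}. \<forall>z\<in>{0,1}. 0 \<le> \<beta> b c y z) \<and>
     (\<forall>y\<in>{0,1}. \<forall>z\<in>{0,1}. \<beta> 0 0 y z + \<beta> 0 1 y z + \<beta> 1 0 y z + \<beta> 1 1 y z = 1)"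

lemma svetlichny_SvF: "svetlichny (SvF V) = 4 * sqrt 2 * V"
  unfolding svetlichny_def SvF_def by (simp add: algebra_simps)

lemma svetlichny_cong:
  assumes "\<And>a b c x y z. a \<in> {0,1} \<Longrightarrow> b \<in> {0,1} \<Longrightarrow> c \<in> {0,1} \<Longrightarrow> x \<in> {0,1} \<Longrightarrow> y \<in> {0,1} \<Longrightarrow> z \<in> {0,1} \<Longrightarrow>
     P a b c x y z = Q a b c x y z"
  shows "svetlichny P = svetlichny Q"
  unfolding svetlichny_def using assms by simp

lemma svetlichny_swap_AB: "svetlichny (\<lambda>a b c x y z. P b a c y x z) = svetlichny P"
  unfolding svetlichny_def by (simp add: algebra_simps)

lemma svetlichny_rotate: "svetlichny (\<lambda>a b c x y z. P c a b z x y) = svetlichny P"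
  unfolding svetlichny_def by (simp add: algebra_simps)

lemma svetlichny_sum: "svetlichny (\<lambda>a b c x y z. \<Sum>l<(n::nat). P l a b c x y z) = (\<Sum>l<n. svetlichny (P l))"
  unfolding svetlichny_def by (induction n) (simp_all add: algebra_simps sum.distrib)

lemma svetlichny_linear3:
  "svetlichny (\<lambda>a b c x y z. p * P a b c x y z + q * Q a b c x y z + r * R a b c x y z)
    = p * svetlichny P + q * svetlichny Q + r * svetlichny R"
  unfolding svetlichny_def by (simp add: algebra_simps)

lemma correlator_bound:
  fixes e0 e1 g00 g01 g10 g11 :: real
  assumes "\<bar>e0\<bar> \<le> 1" "\<bar>e1\<bar> \<le> 1" "\<bar>g00\<bar> \<le> 1" "\<bar>g01\<bar> \<le> 1" "\<bar>g10\<bar> \<le> 1" "\<bar>g11\<bar> \<le> 1"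
  shows "e0 * (g00 + g01 + g10 - g11) + e1 * (g00 - g01 - g10 - g11) \<le> 4"
proof -
  have bound: "g * u \<le> \<bar>u\<bar>" if "\<bar>g\<bar> \<le> 1" for g u :: real
    using mult_right_mono[OF that abs_ge_zero[of u]] abs_ge_self[of "g * u"] by (simp add: abs_mult)
  have "e0 * (g00 + g01 + g10 - g11) + e1 * (g00 - g01 - g10 - g11)
      = g00 * (e0 + e1) + g01 * (e0 - e1) + g10 * (e0 - e1) + g11 * (- e0 - e1)"
    by (simp add: algebra_simps)
  also have "\<dots> \<le> \<bar>e0 + e1\<bar> + \<bar>e0 - e1\<bar> + \<bar>e0 - e1\<bar> + \<bar>- e0 - e1\<bar>"
    using bound assms(3-6) by (intro add_mono) auto
  also have "\<dots> \<le> 4" using assms(1,2) by (auto simp: abs_if)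
  finally show ?thesis .
qed

text \<open>Against a product of a one-party and a two-party distribution the Svetlichny expression is a
  CHSH-type combination of correlators, each of modulus at most one.\<close>
lemma svetlichny_product_le:
  assumes "cond_distr1 \<alpha>" "cond_distr2 \<beta>"
  shows "svetlichny (\<lambda>a b c x y z. \<alpha> a x * \<beta> b c y z) \<le> 4"
proof -
  define e where "e x = \<alpha> 0 x - \<alpha> 1 x" for x
  define g where "g y z = \<beta> 0 0 y z - \<beta> 0 1 y z - \<beta> 1 0 y z + \<beta> 1 1 y z" for y z
  have e: "\<bar>e x\<bar> \<le> 1" if "x \<in> {0,1}" for x
    using assms(1) that unfolding cond_distr1_def e_def by force
  have g: "\<bar>g y z\<bar> \<le> 1" if "y \<in> {0,1}" "z \<in> {0,1}" for y z
    using assms(2) that unfolding cond_distr2_def g_def by force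
  have "svetlichny (\<lambda>a b c x y z. \<alpha> a x * \<beta> b c y z)
      = e 0 * (g 0 0 + g 0 1 + g 1 0 - g 1 1) + e 1 * (g 0 0 - g 0 1 - g 1 0 - g 1 1)"
    unfolding svetlichny_def e_def g_def by (simp add: algebra_simps)
  also have "\<dots> \<le> 4" by (rule correlator_bound) (simp_all add: e g)
  finally show ?thesis .
qed

lemma svetlichny_biseparable_mixture_le:
  fixes n :: nat and p q r :: "nat \<Rightarrow> real"
  assumes weights: "\<forall>l<n. 0 \<le> p l \<and> 0 \<le> q l \<and> 0 \<le> r l" "(\<Sum>l<n. p l + q l + r l) = 1"
    and distrs: "\<forall>l<n. cond_distr1 (\<alpha>A l) \<and> cond_distr2 (\<beta>BC l) \<and> cond_distr1 (\<alpha>B l) \<and>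
      cond_distr2 (\<beta>AC l) \<and> cond_distr1 (\<alpha>C l) \<and> cond_distr2 (\<beta>AB l)"
    and P: "\<And>a b c x y z. a \<in> {0,1} \<Longrightarrow> b \<in> {0,1} \<Longrightarrow> c \<in> {0,1} \<Longrightarrow> x \<in> {0,1} \<Longrightarrow> y \<in> {0,1} \<Longrightarrow> z \<in> {0,1} \<Longrightarrow>
      P a b c x y z = (\<Sum>l<n. p l * (\<alpha>A l a x * \<beta>BC l b c y z) + q l * (\<alpha>B l b y * \<beta>AC l a c x z)
                               + r l * (\<alpha>C l c z * \<beta>AB l a b x y))"
  shows "svetlichny P \<le> 4"
proof -
  have "svetlichny P = svetlichny (\<lambda>a b c x y z. \<Sum>l<n. p l * (\<alpha>A l a x * \<beta>BC l b c y z)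
      + q l * (\<alpha>B l b y * \<beta>AC l a c x z) + r l * (\<alpha>C l c z * \<beta>AB l a b x y))"
    by (rule svetlichny_cong) (rule P)
  also have "\<dots> = (\<Sum>l<n. p l * svetlichny (\<lambda>a b c x y z. \<alpha>A l a x * \<beta>BC l b c y z)
      + q l * svetlichny (\<lambda>a b c x y z. \<alpha>B l b y * \<beta>AC l a c x z)
      + r l * svetlichny (\<lambda>a b c x y z. \<alpha>C l c z * \<beta>AB l a b x y))"
    unfolding svetlichny_sum by (intro sum.cong refl) (rule svetlichny_linear3)
  also have "\<dots> \<le> (\<Sum>l<n. p l * 4 + q l * 4 + r l * 4)"
  proof (rule sum_mono)
    fix l assume "l \<in> {..<n}"
    then have "cond_distr1 (\<alpha>A l)" "cond_distr2 (\<beta>BC l)" "cond_distr1 (\<alpha>B l)"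
      "cond_distr2 (\<beta>AC l)" "cond_distr1 (\<alpha>C l)" "cond_distr2 (\<beta>AB l)"
      and "0 \<le> p l" "0 \<le> q l" "0 \<le> r l" using distrs weights(1) by auto
    \<comment> \<open>the other two bipartitions reduce to the first by the party symmetry of the expression\<close>
    moreover note svetlichny_product_le
      svetlichny_product_le[where \<alpha> = "\<alpha>B l" and \<beta> = "\<beta>AC l", folded svetlichny_swap_AB[of "\<lambda>a b c x y z. _ a x * _ b c y z"]]
      svetlichny_product_le[where \<alpha> = "\<alpha>C l" and \<beta> = "\<beta>AB l", folded svetlichny_rotate[of "\<lambda>a b c x y z. _ a x * _ b c y z"]]
    ultimately show "p l * svetlichny (\<lambda>a b c x y z. \<alpha>A l a x * \<beta>BC l b c y z)
        + q l * svetlichny (\<lambda>a b c x y z. \<alpha>B l b y * \<beta>AC l a c x z)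
        + r l * svetlichny (\<lambda>a b c x y z. \<alpha>C l c z * \<beta>AB l a b x y) \<le> p l * 4 + q l * 4 + r l * 4"
      by (intro add_mono mult_left_mono) auto
  qed
  also have "\<dots> = 4 * (\<Sum>l<n. p l + q l + r l)" by (simp add: sum_distrib_left algebra_simps)
  also have "\<dots> = 4" using weights(2) by simp
  finally show ?thesis .
qed

section \<open>Biseparable models obey the Svetlichny bound\<close>

definition phase :: "nat \<Rightarrow> complex" where
  "phase x = (if x = 0 then 1 else \<i>)"

definition alice_vec :: "nat \<Rightarrow> nat \<Rightarrow> nat \<Rightarrow> complex" where
  "alice_vec a x i = (if i = 0 then 1 else (-1) ^ a * phase x)"

lemma alice_proj_eq_rank_one: "alice_proj a x = rank_one 2 (1/2) (alice_vec a x)"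
proof (rule eq_matI)
  fix i j assume "i < dim_row (rank_one 2 (1/2) (alice_vec a x))" "j < dim_col (rank_one 2 (1/2) (alice_vec a x))"
  then have "i \<in> {0, 1}" "j \<in> {0, 1}" by auto
  then show "alice_proj a x $$ (i, j) = rank_one 2 (1/2) (alice_vec a x) $$ (i, j)"
    by (cases "even a") (auto simp: alice_proj_def alice_obs_def sigma_x_def sigma_y_def mat_of_rows_list_def
        alice_vec_def phase_def)
qed (simp_all add: alice_proj_def alice_obs_def sigma_x_def sigma_y_def mat_of_rows_list_def)

lemma alice_proj_carrier: "alice_proj a x \<in> carrier_mat 2 2"
  by (simp add: alice_proj_eq_rank_one)

lemma alice_povm: "povm2 2 (\<lambda>a. alice_proj a x)"
proof -
  have "alice_proj 0 x + alice_proj 1 x = 1\<^sub>m 2"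
  proof (rule eq_matI)
    fix i j assume "i < dim_row (1\<^sub>m 2 :: complex mat)" "j < dim_col (1\<^sub>m 2 :: complex mat)"
    then have "i \<in> {0, 1}" "j \<in> {0, 1}" by auto
    then show "(alice_proj 0 x + alice_proj 1 x) $$ (i, j) = 1\<^sub>m 2 $$ (i, j)"
      by (auto simp: alice_proj_eq_rank_one alice_vec_def phase_def)
  qed (simp_all add: alice_proj_eq_rank_one)
  then show ?thesis
    unfolding povm2_def alice_proj_eq_rank_one by (simp add: psd_rank_one)
qed

lemma cond_distr1_born:
  assumes M: "\<And>x. x \<in> {0,1} \<Longrightarrow> povm2 n (M x)" and \<rho>: "density n \<rho>"
  shows "cond_distr1 (\<lambda>a x. Re (mtrace (M x a * \<rho>)))"
  unfolding cond_distr1_def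
proof (intro conjI ballI)
  fix a x :: nat assume "a \<in> {0,1}" "x \<in> {0,1}"
  then have "0 \<le> mtrace (M x a * \<rho>)"
    using M \<rho> by (intro mtrace_mult_psd_nonneg) (auto simp: povm2_def density_def)
  then show "0 \<le> Re (mtrace (M x a * \<rho>))" by (simp add: less_eq_complex_def)
next
  fix x :: nat assume "x \<in> {0,1}"
  then have "mtrace (M x 0 * \<rho>) + mtrace (M x 1 * \<rho>) = mtrace ((M x 0 + M x 1) * \<rho>)"
    using M povm2_carrier density_carrier[OF \<rho>] by (metis mtrace_add_mult)
  also have "\<dots> = 1" using M \<open>x \<in> {0,1}\<close> \<rho> density_carrier[OF \<rho>] unfolding povm2_def density_def by simp
  finally show "Re (mtrace (M x 0 * \<rho>)) + Re (mtrace (M x 1 * \<rho>)) = 1"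
    by (metis one_complex.sel plus_complex.sel(1))
qed

lemma cond_distr2_born:
  assumes M: "\<And>y. y \<in> {0,1} \<Longrightarrow> povm2 m (M y)" and N: "\<And>z. z \<in> {0,1} \<Longrightarrow> povm2 n (N z)"
    and \<rho>: "density (m * n) \<rho>"
  shows "cond_distr2 (\<lambda>b c y z. Re (mtrace (kron (M y b) (N z c) * \<rho>)))"
  unfolding cond_distr2_def
proof (intro conjI ballI)
  fix b c y z :: nat assume bcyz: "b \<in> {0,1}" "c \<in> {0,1}" "y \<in> {0,1}" "z \<in> {0,1}"
  have "psd m (M y b)" using M[OF bcyz(3)] bcyz(1) unfolding povm2_def by auto
  moreover have "psd n (N z c)" using N[OF bcyz(4)] bcyz(2) unfolding povm2_def by auto
  ultimately have "0 \<le> mtrace (kron (M y b) (N z c) * \<rho>)"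
    using \<rho> psd_kron mtrace_mult_psd_nonneg unfolding density_def by blast
  then show "0 \<le> Re (mtrace (kron (M y b) (N z c) * \<rho>))" by (simp add: less_eq_complex_def)
next
  fix y z :: nat assume yz: "y \<in> {0,1}" "z \<in> {0,1}"
  have C: "kron (M y b) (N z c) \<in> carrier_mat (m * n) (m * n)" if "b \<in> {0,1}" "c \<in> {0,1}" for b c
    using that povm2_carrier[OF M[OF yz(1)]] povm2_carrier[OF N[OF yz(2)]] by (auto intro: kron_carrier)
  have R: "\<rho> \<in> carrier_mat (m * n) (m * n)" by (rule density_carrier[OF \<rho>])
  have "mtrace (kron (M y 0) (N z 0) * \<rho>) + mtrace (kron (M y 0) (N z 1) * \<rho>)
      + mtrace (kron (M y 1) (N z 0) * \<rho>) + mtrace (kron (M y 1) (N z 1) * \<rho>)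
      = mtrace ((kron (M y 0) (N z 0) + kron (M y 0) (N z 1) + kron (M y 1) (N z 0) + kron (M y 1) (N z 1)) * \<rho>)"
    using C R by (simp add: mtrace_add_mult[of _ "m * n"])
  also have "\<dots> = 1"
    using povm2_kron[OF M[OF yz(1)] N[OF yz(2)]] R \<rho> unfolding density_def by simp
  finally show "Re (mtrace (kron (M y 0) (N z 0) * \<rho>)) + Re (mtrace (kron (M y 0) (N z 1) * \<rho>))
      + Re (mtrace (kron (M y 1) (N z 0) * \<rho>)) + Re (mtrace (kron (M y 1) (N z 1) * \<rho>)) = 1"
    by (metis one_complex.sel plus_complex.sel(1))
qed

lemma mtrace_kron3_biseparable_mixture:
  fixes n :: nat
  assumes A: "psd 2 A" and B: "psd d B" and C: "psd d C"
    and states: "\<forall>l<n. density 2 (\<rho>A l) \<and> density (d * d) (\<rho>BC l) \<and> density (2 * d) (\<rho>AC l) \<and>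
      density d (\<rho>B l) \<and> density (2 * d) (\<rho>AB l) \<and> density d (\<rho>C l)"
  shows "mtrace (kron (kron A B) C * mat (2 * d * d) (2 * d * d) (\<lambda>ij.
      \<Sum>l<n. complex_of_real (p l) * kron (\<rho>A l) (\<rho>BC l) $$ ij
        + complex_of_real (q l) * prod_AC_B d (\<rho>AC l) (\<rho>B l) $$ ij
        + complex_of_real (r l) * kron (\<rho>AB l) (\<rho>C l) $$ ij))
    = complex_of_real (\<Sum>l<n. p l * (Re (mtrace (A * \<rho>A l)) * Re (mtrace (kron B C * \<rho>BC l)))
        + q l * (Re (mtrace (B * \<rho>B l)) * Re (mtrace (kron A C * \<rho>AC l)))
        + r l * (Re (mtrace (C * \<rho>C l)) * Re (mtrace (kron A B * \<rho>AB l))))"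
proof -
  note carriers = psd_carrier[OF A] psd_carrier[OF B] psd_carrier[OF C]
  have K: "kron (kron A B) C \<in> carrier_mat (2 * d * d) (2 * d * d)"
    using carriers by (intro kron_carrier)
  have components: "kron (\<rho>A l) (\<rho>BC l) \<in> carrier_mat (2 * d * d) (2 * d * d) \<and>
    prod_AC_B d (\<rho>AC l) (\<rho>B l) \<in> carrier_mat (2 * d * d) (2 * d * d) \<and>
    kron (\<rho>AB l) (\<rho>C l) \<in> carrier_mat (2 * d * d) (2 * d * d)" if "l < n" for l
    using states that kron_carrier[OF density_carrier density_carrier, of 2 "\<rho>A l" "d * d" "\<rho>BC l"]
      kron_carrier[OF density_carrier density_carrier, of "2 * d" "\<rho>AB l" d "\<rho>C l"]
    by (auto simp: prod_AC_B_def mult.assoc)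
  have terms: "mtrace (kron (kron A B) C * kron (\<rho>A l) (\<rho>BC l))
      = complex_of_real (Re (mtrace (A * \<rho>A l)) * Re (mtrace (kron B C * \<rho>BC l)))"
    "mtrace (kron (kron A B) C * prod_AC_B d (\<rho>AC l) (\<rho>B l))
      = complex_of_real (Re (mtrace (B * \<rho>B l)) * Re (mtrace (kron A C * \<rho>AC l)))"
    "mtrace (kron (kron A B) C * kron (\<rho>AB l) (\<rho>C l))
      = complex_of_real (Re (mtrace (C * \<rho>C l)) * Re (mtrace (kron A B * \<rho>AB l)))"
    if "l < n" for l
  proof -
    have "density 2 (\<rho>A l)" "density (d * d) (\<rho>BC l)" "density (2 * d) (\<rho>AC l)"
      "density d (\<rho>B l)" "density (2 * d) (\<rho>AB l)" "density d (\<rho>C l)"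
      using states that by auto
    note \<rho>l = this[THEN density_psd]
    show "mtrace (kron (kron A B) C * kron (\<rho>A l) (\<rho>BC l))
      = complex_of_real (Re (mtrace (A * \<rho>A l)) * Re (mtrace (kron B C * \<rho>BC l)))"
      unfolding mtrace_kron3_mult_kron_A_BC[OF carriers \<rho>l(1,2)[THEN psd_carrier]]
      by (rule mtrace_mult_psd_product[OF A \<rho>l(1) psd_kron[OF B C] \<rho>l(2)])
    show "mtrace (kron (kron A B) C * prod_AC_B d (\<rho>AC l) (\<rho>B l))
      = complex_of_real (Re (mtrace (B * \<rho>B l)) * Re (mtrace (kron A C * \<rho>AC l)))"
      unfolding mtrace_kron3_mult_prod_AC_B[OF carriers \<rho>l(3,4)[THEN psd_carrier]]
      using mtrace_mult_psd_product[OF psd_kron[OF A C] \<rho>l(3) B \<rho>l(4)] by (simp add: mult.commute)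
    show "mtrace (kron (kron A B) C * kron (\<rho>AB l) (\<rho>C l))
      = complex_of_real (Re (mtrace (C * \<rho>C l)) * Re (mtrace (kron A B * \<rho>AB l)))"
      unfolding mtrace_kron3_mult_kron_AB_C[OF carriers \<rho>l(5,6)[THEN psd_carrier]]
      using mtrace_mult_psd_product[OF psd_kron[OF A B] \<rho>l(5) C \<rho>l(6)] by (simp add: mult.commute)
  qed
  let ?component = "\<lambda>l. complex_of_real (p l * (Re (mtrace (A * \<rho>A l)) * Re (mtrace (kron B C * \<rho>BC l)))
      + q l * (Re (mtrace (B * \<rho>B l)) * Re (mtrace (kron A C * \<rho>AC l)))
      + r l * (Re (mtrace (C * \<rho>C l)) * Re (mtrace (kron A B * \<rho>AB l))))"
  have "mtrace (kron (kron A B) C * mat (2 * d * d) (2 * d * d) (\<lambda>ij.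
      \<Sum>l<n. complex_of_real (p l) * kron (\<rho>A l) (\<rho>BC l) $$ ij
        + complex_of_real (q l) * prod_AC_B d (\<rho>AC l) (\<rho>B l) $$ ij
        + complex_of_real (r l) * kron (\<rho>AB l) (\<rho>C l) $$ ij))
    = (\<Sum>l<n. complex_of_real (p l) * mtrace (kron (kron A B) C * kron (\<rho>A l) (\<rho>BC l))
        + complex_of_real (q l) * mtrace (kron (kron A B) C * prod_AC_B d (\<rho>AC l) (\<rho>B l))
        + complex_of_real (r l) * mtrace (kron (kron A B) C * kron (\<rho>AB l) (\<rho>C l)))"
    by (rule mtrace_mult_weighted_sum[OF K]) (rule components)
  also have "\<dots> = (\<Sum>l<n. ?component l)"
    by (intro sum.cong refl) (simp add: terms)
  finally show ?thesis by (simp only: of_real_sum)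
qed

lemma biseparable_model_svetlichny_le:
  assumes "biseparable_model P"
  shows "svetlichny P \<le> 4"
proof -
  obtain d \<rho> N N' where bisep: "biseparable d \<rho>"
    and N: "\<forall>y \<in> {0, 1}. povm2 d (N y)" and N': "\<forall>z \<in> {0, 1}. povm2 d (N' z)"
    and P: "\<forall>a \<in> {0, 1}. \<forall>b \<in> {0, 1}. \<forall>c \<in> {0, 1}. \<forall>x \<in> {0, 1}. \<forall>y \<in> {0, 1}. \<forall>z \<in> {0, 1}.
          complex_of_real (P a b c x y z) = mtrace (kron (kron (alice_proj a x) (N y b)) (N' z c) * \<rho>)"
    using assms unfolding biseparable_model_def by blast
  obtain n :: nat and p q r :: "nat \<Rightarrow> real" and \<rho>A \<rho>BC \<rho>AC \<rho>B \<rho>AB \<rho>C where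
    states: "\<forall>l<n. 0 \<le> p l \<and> 0 \<le> q l \<and> 0 \<le> r l \<and>
      density 2 (\<rho>A l) \<and> density (d * d) (\<rho>BC l) \<and> density (2 * d) (\<rho>AC l) \<and>
      density d (\<rho>B l) \<and> density (2 * d) (\<rho>AB l) \<and> density d (\<rho>C l)"
    and weights: "(\<Sum>l<n. p l + q l + r l) = 1"
    and \<rho>: "\<rho> = mat (2 * d * d) (2 * d * d) (\<lambda>ij.
      \<Sum>l<n. complex_of_real (p l) * kron (\<rho>A l) (\<rho>BC l) $$ ij
        + complex_of_real (q l) * prod_AC_B d (\<rho>AC l) (\<rho>B l) $$ ij
        + complex_of_real (r l) * kron (\<rho>AB l) (\<rho>C l) $$ ij)"
    using bisep unfolding biseparable_def by blast
  define \<alpha>A where "\<alpha>A l = (\<lambda>a x. Re (mtrace (alice_proj a x * \<rho>A l)))" for l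
  define \<beta>BC where "\<beta>BC l = (\<lambda>b c y z. Re (mtrace (kron (N y b) (N' z c) * \<rho>BC l)))" for l
  define \<alpha>B where "\<alpha>B l = (\<lambda>b y. Re (mtrace (N y b * \<rho>B l)))" for l
  define \<beta>AC where "\<beta>AC l = (\<lambda>a c x z. Re (mtrace (kron (alice_proj a x) (N' z c) * \<rho>AC l)))" for l
  define \<alpha>C where "\<alpha>C l = (\<lambda>c z. Re (mtrace (N' z c * \<rho>C l)))" for l
  define \<beta>AB where "\<beta>AB l = (\<lambda>a b x y. Re (mtrace (kron (alice_proj a x) (N y b) * \<rho>AB l)))" for l
  have "\<forall>l<n. cond_distr1 (\<alpha>A l) \<and> cond_distr2 (\<beta>BC l) \<and> cond_distr1 (\<alpha>B l) \<and>
      cond_distr2 (\<beta>AC l) \<and> cond_distr1 (\<alpha>C l) \<and> cond_distr2 (\<beta>AB l)"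
    unfolding \<alpha>A_def \<beta>BC_def \<alpha>B_def \<beta>AC_def \<alpha>C_def \<beta>AB_def
    using states N N' alice_povm by (auto intro!: cond_distr1_born cond_distr2_born)
  moreover have "P a b c x y z = (\<Sum>l<n. p l * (\<alpha>A l a x * \<beta>BC l b c y z) + q l * (\<alpha>B l b y * \<beta>AC l a c x z)
      + r l * (\<alpha>C l c z * \<beta>AB l a b x y))"
    if abc: "a \<in> {0,1}" "b \<in> {0,1}" "c \<in> {0,1}" "x \<in> {0,1}" "y \<in> {0,1}" "z \<in> {0,1}" for a b c x y z
  proof -
    have measurement: "psd 2 (alice_proj a x)" "psd d (N y b)" "psd d (N' z c)"
      using alice_povm[of x] N N' abc povm2_psd by blast+
    have "complex_of_real (P a b c x y z) = mtrace (kron (kron (alice_proj a x) (N y b)) (N' z c) * \<rho>)"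
      using P abc by blast
    also have "\<dots> = complex_of_real (\<Sum>l<n. p l * (\<alpha>A l a x * \<beta>BC l b c y z)
        + q l * (\<alpha>B l b y * \<beta>AC l a c x z) + r l * (\<alpha>C l c z * \<beta>AB l a b x y))"
      unfolding \<rho> \<alpha>A_def \<beta>BC_def \<alpha>B_def \<beta>AC_def \<alpha>C_def \<beta>AB_def
      by (rule mtrace_kron3_biseparable_mixture[OF measurement]) (use states in blast)
    finally show ?thesis by (simp only: of_real_eq_iff)
  qed
  ultimately show ?thesis
    using states weights by (intro svetlichny_biseparable_mixture_le[of n p q r]) auto
qed

section \<open>A biseparable model below the threshold\<close>

text \<open>Bob's system carries a classical label \<open>k < 4\<close>, read off by a diagonal measurement, and he
  answers with the \<open>k\<close>-th function \<open>{0,1} \<rightarrow> {0,1}\<close> of his setting. Charlie measures Alice's qubit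
  observable on \<open>span(e\<^sub>0, e\<^sub>1)\<close> and answers 0 on \<open>e\<^sub>2, e\<^sub>3\<close>. Alice and Charlie share
  \<open>(|00\<rangle> + w|11\<rangle>)/\<surd>2\<close>; index 5 of \<open>\<complex>\<^sup>2 \<otimes> \<complex>\<^sup>4\<close> is \<open>|1\<rangle>|1\<rangle>\<close>.\<close>
definition bob_response :: "nat \<Rightarrow> nat \<Rightarrow> nat" where
  "bob_response k y = (if k = 0 then 0 else if k = 1 then 1 else if k = 2 then y else 1 - y)"

definition bob_povm :: "nat \<Rightarrow> nat \<Rightarrow> complex mat" where
  "bob_povm y b = mat 4 4 (\<lambda>(i, j). if i = j then complex_of_real (if bob_response i y = b then 1 else 0) else 0)"

definition charlie_povm :: "nat \<Rightarrow> nat \<Rightarrow> complex mat" where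
  "charlie_povm z c = rank_one 4 (1/2) (\<lambda>i. if i < 2 then alice_vec c z i else 0) +
     (if c = 0 then rank_one 4 1 (unit_fun 2) + rank_one 4 1 (unit_fun 3) else 0\<^sub>m 4 4)"

definition ac_vec :: "complex \<Rightarrow> nat \<Rightarrow> complex" where
  "ac_vec w i = (if i = 0 then 1 else if i = 5 then w else 0)"

lemma povm2_bob_povm: "y \<in> {0, 1} \<Longrightarrow> povm2 4 (bob_povm y)"
  unfolding povm2_def bob_povm_def
  by (intro conjI psd_diag_mat eq_matI) (auto simp: bob_response_def)

lemma povm2_charlie_povm: "povm2 4 (charlie_povm z)"
  unfolding povm2_def
proof (intro conjI)
  show "psd 4 (charlie_povm z 0)" "psd 4 (charlie_povm z 1)"
    unfolding charlie_povm_def by (auto intro!: psd_add psd_rank_one psd_zero_mat)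
  show "charlie_povm z 0 + charlie_povm z 1 = 1\<^sub>m 4"
  proof (rule eq_matI)
    fix i j assume "i < dim_row (1\<^sub>m 4 :: complex mat)" "j < dim_col (1\<^sub>m 4 :: complex mat)"
    then have "i \<in> {0, 1, 2, 3}" "j \<in> {0, 1, 2, 3}" by auto
    then show "(charlie_povm z 0 + charlie_povm z 1) $$ (i, j) = 1\<^sub>m 4 $$ (i, j)"
      by (auto simp: charlie_povm_def unit_fun_def alice_vec_def phase_def)
  qed (simp_all add: charlie_povm_def)
qed

lemma mtrace_bob_povm_unit:
  "k < 4 \<Longrightarrow> mtrace (bob_povm y b * rank_one 4 1 (unit_fun k)) = (if bob_response k y = b then 1 else 0)"
  using mtrace_mult_rank_one[of "bob_povm y b" 4 1 "unit_fun k"] by (simp add: quad_form_unit bob_povm_def)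

lemma alice_proj_index:
  "i < 2 \<Longrightarrow> j < 2 \<Longrightarrow> alice_proj a x $$ (i, j) = 1/2 * alice_vec a x i * cnj (alice_vec a x j)"
  by (simp add: alice_proj_eq_rank_one)

lemma charlie_povm_carrier: "charlie_povm z c \<in> carrier_mat 4 4"
  by (simp add: charlie_povm_def)

lemma charlie_povm_index:
  "i < 2 \<Longrightarrow> j < 2 \<Longrightarrow> charlie_povm z c $$ (i, j) = 1/2 * alice_vec c z i * cnj (alice_vec c z j)"
  by (auto simp: charlie_povm_def unit_fun_def)

lemma alice_vec_unimodular: "alice_vec a x 1 * cnj (alice_vec a x 1) = 1"
  by (cases "even a") (simp_all add: alice_vec_def phase_def)

lemma mtrace_alice_charlie_ac_state:
  assumes w: "w * cnj w = 1"
  shows "mtrace (kron (alice_proj a x) (charlie_povm z c) * rank_one 8 (1/2) (ac_vec w))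
    = complex_of_real ((1 + Re (cnj (alice_vec a x 1 * alice_vec c z 1) * w)) / 4)"
proof -
  define \<alpha> where "\<alpha> = alice_vec a x 1"
  define \<beta> where "\<beta> = alice_vec c z 1"
  let ?K = "kron (alice_proj a x) (charlie_povm z c)"
  have dims: "dim_row (alice_proj a x) = 2" "dim_col (alice_proj a x) = 2"
    "dim_row (charlie_povm z c) = 4" "dim_col (charlie_povm z c) = 4"
    using alice_proj_carrier[of a x] charlie_povm_carrier[of z c] by auto
  have "mtrace (?K * rank_one 8 (1/2) (ac_vec w)) = 1/2 * quad_form 8 (entries ?K) (ac_vec w)"
    using mtrace_mult_rank_one[OF kron_carrier[OF alice_proj_carrier charlie_povm_carrier]] by simp
  also have "quad_form 8 (entries ?K) (ac_vec w)
      = ?K $$ (0, 0) + ?K $$ (0, 5) * w + cnj w * ?K $$ (5, 0) + cnj w * ?K $$ (5, 5) * w"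
    by (subst quad_form_two_support[of 0 8 5]) (auto simp: ac_vec_def)
  also have "\<dots> = 1/4 * (1 + cnj \<alpha> * cnj \<beta> * w + cnj w * (\<alpha> * \<beta>) + (\<alpha> * cnj \<alpha>) * (\<beta> * cnj \<beta>) * (w * cnj w))"
    by (simp add: dims alice_proj_index charlie_povm_index \<alpha>_def \<beta>_def alice_vec_def[of _ _ 0] algebra_simps)
  also have "\<dots> = 1/4 * (2 + (cnj (\<alpha> * \<beta>) * w + cnj (cnj (\<alpha> * \<beta>) * w)))"
    using w alice_vec_unimodular unfolding \<alpha>_def \<beta>_def by (simp add: algebra_simps)
  also have "\<dots> = complex_of_real ((1 + Re (cnj (\<alpha> * \<beta>) * w)) / 2)"
    unfolding complex_add_cnj by (simp add: field_simps del: times_complex.sel complex_cnj_mult)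
  finally show ?thesis unfolding \<alpha>_def \<beta>_def by (simp del: times_complex.sel complex_cnj_mult)
qed

text \<open>The eight components of the model: labels \<open>l < 4\<close> have weight \<open>t/4\<close>, Bob's response \<open>l\<close> and
  phase \<open>1, -1, \<i>, -\<i>\<close>; labels \<open>4..7\<close> are white noise of total weight \<open>1 - t\<close>.\<close>
definition label_phase :: "nat \<Rightarrow> complex" where
  "label_phase l = (if l = 0 then 1 else if l = 1 then -1 else if l = 2 then \<i> else if l = 3 then -\<i>
     else if l = 4 \<or> l = 5 then 1 else -1)"

definition label_bob :: "nat \<Rightarrow> nat" where
  "label_bob l = (if l < 4 then l else if l = 4 \<or> l = 6 then 0 else 1)"

definition label_weight :: "real \<Rightarrow> nat \<Rightarrow> real" where
  "label_weight t l = (if l < 4 then t / 4 else (1 - t) / 4)"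

definition model_state :: "real \<Rightarrow> complex mat" where
  "model_state t = mat (2 * 4 * 4) (2 * 4 * 4) (\<lambda>ij. \<Sum>l<8. complex_of_real (label_weight t l) *
     prod_AC_B 4 (rank_one 8 (1/2) (ac_vec (label_phase l))) (rank_one 4 1 (unit_fun (label_bob l))) $$ ij)"

lemma label_phase_unimodular: "label_phase l * cnj (label_phase l) = 1"
  by (simp add: label_phase_def)

lemma density_ac_state:
  assumes "w * cnj w = 1" shows "density 8 (rank_one 8 (1/2) (ac_vec w))"
proof -
  have "(\<Sum>i<8. ac_vec w i * cnj (ac_vec w i)) = ac_vec w 0 * cnj (ac_vec w 0) + ac_vec w 5 * cnj (ac_vec w 5)"
    by (rule sum_lessThan_two_support) (simp_all add: ac_vec_def)
  then show ?thesis
    using assms unfolding density_def mtrace_rank_one by (simp add: psd_rank_one ac_vec_def)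
qed

lemma biseparable_model_state:
  assumes "0 \<le> t" "t \<le> 1"
  shows "biseparable 4 (model_state t)"
  unfolding biseparable_def
proof (rule exI[of _ 8], rule exI[of _ "\<lambda>_. 0"], rule exI[of _ "label_weight t"], rule exI[of _ "\<lambda>_. 0"],
    rule exI[of _ "\<lambda>_. rank_one 2 1 (unit_fun 0)"], rule exI[of _ "\<lambda>_. rank_one (4 * 4) 1 (unit_fun 0)"],
    rule exI[of _ "\<lambda>l. rank_one 8 (1/2) (ac_vec (label_phase l))"], rule exI[of _ "\<lambda>l. rank_one 4 1 (unit_fun (label_bob l))"],
    rule exI[of _ "\<lambda>_. rank_one (2 * 4) 1 (unit_fun 0)"], rule exI[of _ "\<lambda>_. rank_one 4 1 (unit_fun 0)"],
    intro conjI allI impI)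
  fix l :: nat
  show "0 \<le> label_weight t l" using assms by (simp add: label_weight_def)
  show "density (2 * 4) (rank_one 8 (1/2) (ac_vec (label_phase l)))"
    using density_ac_state[OF label_phase_unimodular] by simp
  show "density 4 (rank_one 4 1 (unit_fun (label_bob l)))"
    by (rule density_unit) (simp add: label_bob_def)
  show "density 2 (rank_one 2 1 (unit_fun 0))" "density (4 * 4) (rank_one (4 * 4) 1 (unit_fun 0))"
    "density (2 * 4) (rank_one (2 * 4) 1 (unit_fun 0))" "density 4 (rank_one 4 1 (unit_fun 0))"
    by (simp_all add: density_unit)
  show "0 \<le> (0 :: real)" "0 \<le> (0 :: real)" by simp_all
  show "(\<Sum>l<8. 0 + label_weight t l + 0) = 1"
    by (simp add: eval_nat_numeral label_weight_def field_simps)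
  show "model_state t = mat (2 * 4 * 4) (2 * 4 * 4) (\<lambda>ij. \<Sum>l<8.
      complex_of_real 0 * kron (rank_one 2 1 (unit_fun 0)) (rank_one (4 * 4) 1 (unit_fun 0)) $$ ij
    + complex_of_real (label_weight t l) *
        prod_AC_B 4 (rank_one 8 (1/2) (ac_vec (label_phase l))) (rank_one 4 1 (unit_fun (label_bob l))) $$ ij
    + complex_of_real 0 * kron (rank_one (2 * 4) 1 (unit_fun 0)) (rank_one 4 1 (unit_fun 0)) $$ ij)"
    by (simp add: model_state_def)
qed

text \<open>The finite check behind the model: averaging Charlie-Alice correlations with phases \<open>\<plusminus>1, \<plusminus>\<i>\<close>
  against Bob's four deterministic responses reproduces the Svetlichny family with visibility \<open>t\<close>.\<close>
lemma model_probability: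
  assumes "a \<in> {0,1}" "b \<in> {0,1}" "c \<in> {0,1}" "x \<in> {0,1}" "y \<in> {0,1}" "z \<in> {0,1}"
  shows "(2 + (-1) ^ (a + b + c + x * y + y * z + x * z) * t) / 16 =
    (\<Sum>l<8. label_weight t l * ((1 + Re (cnj (alice_vec a x 1 * alice_vec c z 1) * label_phase l)) / 4 *
       (if bob_response (label_bob l) y = b then 1 else 0)))"
  using assms
  by (auto simp: eval_nat_numeral label_weight_def label_phase_def label_bob_def bob_response_def
      alice_vec_def phase_def field_simps)

lemma mtrace_model_state:
  assumes abc: "a \<in> {0,1}" "b \<in> {0,1}" "c \<in> {0,1}" "x \<in> {0,1}" "y \<in> {0,1}" "z \<in> {0,1}"
  shows "mtrace (kron (kron (alice_proj a x) (bob_povm y b)) (charlie_povm z c) * model_state t)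
    = complex_of_real ((2 + (-1) ^ (a + b + c + x * y + y * z + x * z) * t) / 16)"
proof -
  let ?K = "kron (kron (alice_proj a x) (bob_povm y b)) (charlie_povm z c)"
  let ?AC = "\<lambda>l. rank_one 8 (1/2) (ac_vec (label_phase l))" and ?B = "\<lambda>l. rank_one 4 1 (unit_fun (label_bob l))"
  have B: "bob_povm y b \<in> carrier_mat 4 4" by (simp add: bob_povm_def)
  have K: "?K \<in> carrier_mat (2 * 4 * 4) (2 * 4 * 4)"
    using kron_carrier[OF kron_carrier[OF alice_proj_carrier B] charlie_povm_carrier] .
  have state: "model_state t = mat (2 * 4 * 4) (2 * 4 * 4) (\<lambda>ij. \<Sum>l<8. 0 * 0\<^sub>m (2 * 4 * 4) (2 * 4 * 4) $$ ij
      + complex_of_real (label_weight t l) * prod_AC_B 4 (?AC l) (?B l) $$ ij + 0 * 0\<^sub>m (2 * 4 * 4) (2 * 4 * 4) $$ ij)"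
    by (simp add: model_state_def)
  have "mtrace (?K * model_state t) = (\<Sum>l<8. 0 * mtrace (?K * 0\<^sub>m (2 * 4 * 4) (2 * 4 * 4))
      + complex_of_real (label_weight t l) * mtrace (?K * prod_AC_B 4 (?AC l) (?B l))
      + 0 * mtrace (?K * 0\<^sub>m (2 * 4 * 4) (2 * 4 * 4)))"
    unfolding state by (rule mtrace_mult_weighted_sum[OF K]) (simp add: prod_AC_B_def)
  also have "\<dots> = (\<Sum>l<8. complex_of_real (label_weight t l) * mtrace (?K * prod_AC_B 4 (?AC l) (?B l)))"
    by simp
  also have "\<dots> = (\<Sum>l<8. complex_of_real (label_weight t l) *
      (complex_of_real ((1 + Re (cnj (alice_vec a x 1 * alice_vec c z 1) * label_phase l)) / 4) *
       (if bob_response (label_bob l) y = b then 1 else 0)))"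
  proof (intro sum.cong refl arg_cong2[where f = "(*)"])
    fix l
    have "mtrace (?K * prod_AC_B 4 (?AC l) (?B l))
        = mtrace (kron (alice_proj a x) (charlie_povm z c) * ?AC l) * mtrace (bob_povm y b * ?B l)"
      by (rule mtrace_kron3_mult_prod_AC_B[OF alice_proj_carrier B charlie_povm_carrier]) simp_all
    then show "mtrace (?K * prod_AC_B 4 (?AC l) (?B l)) =
        complex_of_real ((1 + Re (cnj (alice_vec a x 1 * alice_vec c z 1) * label_phase l)) / 4) *
        (if bob_response (label_bob l) y = b then 1 else 0)"
      by (simp add: mtrace_alice_charlie_ac_state[OF label_phase_unimodular] mtrace_bob_povm_unit label_bob_def
          del: times_complex.sel complex_cnj_mult)
  qed
  also have "\<dots> = complex_of_real ((2 + (-1) ^ (a + b + c + x * y + y * z + x * z) * t) / 16)"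
    unfolding model_probability[OF abc] of_real_sum of_real_mult
    by (intro sum.cong refl) (simp del: times_complex.sel complex_cnj_mult)
  finally show ?thesis .
qed

lemma SvF_biseparable_model:
  assumes "0 < V" "V \<le> 1 / sqrt 2"
  shows "biseparable_model (SvF V)"
proof -
  define t where "t = sqrt 2 * V"
  have t: "0 \<le> t" "t \<le> 1" using assms unfolding t_def by (simp_all add: field_simps)
  have SvF: "SvF V a b c x y z = (2 + (-1) ^ (a + b + c + x * y + y * z + x * z) * t) / 16" for a b c x y z
    unfolding SvF_def t_def by (simp add: mult.assoc)
  show ?thesis
    unfolding biseparable_model_def
  proof (rule exI[of _ 4], rule exI[of _ "model_state t"], rule exI[of _ bob_povm], rule exI[of _ charlie_povm],
      intro conjI ballI)
    show "1 \<le> (4 :: nat)" by simp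
    show "biseparable 4 (model_state t)" by (rule biseparable_model_state[OF t])
    show "povm2 4 (bob_povm y)" if "y \<in> {0, 1}" for y using that by (rule povm2_bob_povm)
    show "povm2 4 (charlie_povm z)" for z by (rule povm2_charlie_povm)
    show "complex_of_real (SvF V a b c x y z)
        = mtrace (kron (kron (alice_proj a x) (bob_povm y b)) (charlie_povm z c) * model_state t)"
      if "a \<in> {0, 1}" "b \<in> {0, 1}" "c \<in> {0, 1}" "x \<in> {0, 1}" "y \<in> {0, 1}" "z \<in> {0, 1}"
      for a b c x y z
      unfolding SvF mtrace_model_state[OF that] ..
  qed
qed

theorem proposition3:
  fixes V :: real
  assumes "0 < V" and "V \<le> 1"
  shows "genuine_tripartite_steering_2SDI (SvF V) \<longleftrightarrow> V > 1 / sqrt 2"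
proof
  assume "genuine_tripartite_steering_2SDI (SvF V)"
  then show "V > 1 / sqrt 2"
    using SvF_biseparable_model[OF assms(1)] unfolding genuine_tripartite_steering_2SDI_def by force
next
  assume "V > 1 / sqrt 2"
  then have "4 < svetlichny (SvF V)"
    unfolding svetlichny_SvF by (simp add: field_simps)
  then show "genuine_tripartite_steering_2SDI (SvF V)"
    unfolding genuine_tripartite_steering_2SDI_def using biseparable_model_svetlichny_le by force
qed

end
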